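(* Let $d\ge1$, $\mathcal{X}={\mathbb R}^d/{\mathbb Z}^d$, $\theta\in(-1/2,1/2)^d$, and for $\varepsilon>0$ let $T^\varepsilon$ be the operator on $L^2(\mathcal{X})$ (Lebesgue measure) defined in the context. Then for every $\varepsilon>0$ the functions $\varphi_k(x)=e^{2\pi i k\cdot x}$, $k\in{\mathbb Z}^d$, form a complete system of eigenfunctions of $T^\varepsilon$, and the corresponding eigenvalues $\lambda^\varepsilon_k$ satisfy $$\big|\lambda^\varepsilon_k-e^{-\pi^2\varepsilon|k|^2}\lambda_k\big|\le 2^{d+1}e^{-\frac{1}{8\varepsilon}},\qquad \lambda_k=e^{-2\pi i k\cdot\theta},$$ uniformly for $0<\varepsilon<1/(8(d+2)\ln 2)$ (and all $k\in{\mathbb Z}^d$).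
   Context: On the torus use the distance $\mathrm{d}(x,x')=\min_{k\in{\mathbb Z}^d}|\hat x'-\hat x+k|$ for representatives $\hat x,\hat x'\in{\mathbb R}^d$. Let $\mathbf{C}=(-1/2,1/2]^d$. $T^\varepsilon$ is the entropically regularized transfer operator of the shift map $F(x)=x+\theta$ with respect to the uniform (invariant) measure, which here is the integral operator $(T^\varepsilon h)(y)=\int_{\mathcal{X}} h(x)\,t^\varepsilon(x,y)\,\mathrm{d}x$ with kernel $t^\varepsilon(x,y)=\frac{1}{Z_\varepsilon}e^{-\mathrm{d}(x+\theta,y)^2/\varepsilon}$, $Z_\varepsilon=\varepsilon^{d/2}\int_{\varepsilon^{-1/2}\mathbf{C}}e^{-|\zeta|^2}\,\mathrm{d}\zeta$. *)

theory Defs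
  imports "HOL-Analysis.Analysis"
begin

text \<open>Points of the torus R^d/Z^d are represented by representatives in R^d
 (type real^'d, d = CARD('d)); functions on the torus by functions on R^d,
 integrated over the fundamental domain C = (-1/2,1/2]^d with Lebesgue measure.\<close>

definition int_lattice :: "(real ^ 'd) set" where
  "int_lattice = {k. \<forall>i. k $ i \<in> \<int>}"

definition torus_dist :: "real ^ 'd \<Rightarrow> real ^ 'd \<Rightarrow> real" where
  "torus_dist x x' = (INF k\<in>int_lattice. norm (x' - x + k))"

definition cube :: "(real ^ 'd) set" where
  "cube = {x. \<forall>i. -1/2 < x $ i \<and> x $ i \<le> 1/2}"

definition Zeps :: "real \<Rightarrow> ('d::finite) itself \<Rightarrow> real" where
  "Zeps \<epsilon> _ = \<epsilon> powr (real CARD('d) / 2) *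
     (LINT \<zeta>|lebesgue_on ((\<lambda>x. \<epsilon> powr (-1/2) *\<^sub>R x) ` (cube :: (real^'d) set)).
        exp (- (norm \<zeta>)\<^sup>2))"

definition teps :: "real \<Rightarrow> real ^ 'd \<Rightarrow> real ^ 'd \<Rightarrow> real ^ 'd \<Rightarrow> real" where
  "teps \<epsilon> \<theta> x y = exp (- (torus_dist (x + \<theta>) y)\<^sup>2 / \<epsilon>) / Zeps \<epsilon> TYPE('d)"

definition Teps :: "real \<Rightarrow> real ^ 'd \<Rightarrow> (real ^ 'd \<Rightarrow> complex) \<Rightarrow> real ^ 'd \<Rightarrow> complex" where
  "Teps \<epsilon> \<theta> h y = (LINT x|lebesgue_on cube. h x * complex_of_real (teps \<epsilon> \<theta> x y))"

definition fourier_mode :: "real ^ 'd \<Rightarrow> real ^ 'd \<Rightarrow> complex" where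
  "fourier_mode k x = exp (2 * pi * \<i> * complex_of_real (k \<bullet> x))"

end

theory Submission
  imports Defs "HOL-Probability.Probability"
begin

(* The Fourier modes are total: by Stone-Weierstrass on the image of the torus in C^d, trigonometric
   polynomials approximate every continuous periodic function uniformly, and continuous functions
   are dense enough (Lusin) to test the phase of an orthogonal L^2 function, forcing it to vanish.
   The kernel t^eps(x, y) depends only on x + theta - y modulo Z^d, so translation invariance of
   integrals of periodic functions makes every mode an eigenfunction with eigenvalue
   e^{-2 pi i k.theta} times the k-th Fourier coefficient of the normalised periodised Gaussian.
   On the fundamental cube the torus distance is the Euclidean norm, so this coefficient is a
   product of one-dimensional Gaussian integrals truncated to (-1/2, 1/2]; the untruncated ones
   are explicit, and truncation only costs the Gaussian tail beyond 1/2, which is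
   O(e^{-1/(8 eps)}) relative to the mass. *)

section \<open>Gaussian integrals on the line\<close>

lemma
  fixes a c :: real
  assumes c: "c > 0"
  shows integrable_gaussian_char:
      "integrable lborel (\<lambda>t. exp (\<i> * complex_of_real (a * t)) * complex_of_real (exp (- t\<^sup>2 / c)))"
    and integral_gaussian_char:
      "(LINT t|lborel. exp (\<i> * complex_of_real (a * t)) * complex_of_real (exp (- t\<^sup>2 / c)))
         = complex_of_real (sqrt (pi * c) * exp (- a\<^sup>2 * c / 4))"
proof -
  \<comment> \<open>\<open>t = s x\<close> turns the integral into the characteristic function of the standard normal law\<close>
  define s where "s = sqrt (c / 2)"
  have s: "s > 0" "c = 2 * s\<^sup>2" using c by (auto simp: s_def)
  define f where "f t = exp (\<i> * complex_of_real (a * t)) * complex_of_real (exp (- t\<^sup>2 / c))" for t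
  have f_scaled: "f (0 + s * x) = complex_of_real (sqrt (2 * pi)) * (std_normal_density x *\<^sub>R iexp (a * s * x))"
    for x using s by (simp add: f_def std_normal_density_def power_mult_distrib scaleR_conv_of_real mult_ac)
  have integrable_normal: "integrable lborel (\<lambda>x. std_normal_density x *\<^sub>R iexp (a * s * x))"
    by (rule Bochner_Integration.integrable_bound[where f = std_normal_density])
       (auto simp: norm_exp_i_times normal_density_nonneg)
  have "char std_normal_distribution (a * s) = exp (- ((a * s)\<^sup>2) / 2)"
    by (simp add: char_std_normal_distribution)
  then have char_normal: "(LINT x|lborel. std_normal_density x *\<^sub>R iexp (a * s * x)) = exp (- ((a * s)\<^sup>2) / 2)"
    unfolding char_def by (subst (asm) integral_density) (auto simp: normal_density_nonneg)
  have "integrable lborel (\<lambda>x. f (0 + s * x))"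
    unfolding f_scaled by (intro integrable_mult_right integrable_normal)
  then show "integrable lborel f"
    using lborel_integrable_real_affine_iff[of s f 0] s by simp
  have "(LINT t|lborel. f t) = s *\<^sub>R (LINT x|lborel. f (0 + s * x))"
    using lborel_integral_real_affine[of s f 0] s by simp
  also have "\<dots> = complex_of_real (s * sqrt (2 * pi) * exp (- ((a * s)\<^sup>2) / 2))"
    unfolding f_scaled integral_mult_right_zero char_normal by (simp add: scaleR_conv_of_real)
  also have "s * sqrt (2 * pi) * exp (- ((a * s)\<^sup>2) / 2) = sqrt (pi * c) * exp (- a\<^sup>2 * c / 4)"
  proof -
    have "s * sqrt (2 * pi) = sqrt (pi * c)"
      unfolding s_def by (simp add: real_sqrt_mult[symmetric])
    moreover have "- ((a * s)\<^sup>2) / 2 = - a\<^sup>2 * c / 4"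
      using s(2) by (simp add: power_mult_distrib)
    ultimately show ?thesis by simp
  qed
  finally show "(LINT t|lborel. f t) = complex_of_real (sqrt (pi * c) * exp (- a\<^sup>2 * c / 4))" .
qed

lemma
  fixes c :: real
  assumes "c > 0"
  shows integrable_gaussian: "integrable lborel (\<lambda>t. exp (- t\<^sup>2 / c))"
    and integral_gaussian: "(LINT t|lborel. exp (- t\<^sup>2 / c)) = sqrt (pi * c)"
  using integrable_gaussian_char[OF assms, of 0] integral_gaussian_char[OF assms, of 0]
  by (simp_all add: complex_of_real_integrable_eq)

lemma lborel_integral_split_compl:
  fixes f :: "'a::euclidean_space \<Rightarrow> 'b::{banach, second_countable_topology}"
  assumes "integrable lborel f" "A \<in> sets borel"
  shows "integral\<^sup>L lborel f = (LINT x:A|lborel. f x) + (LINT x:-A|lborel. f x)"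
proof -
  have "integral\<^sup>L lborel f = (LINT x|lborel. indicator A x *\<^sub>R f x + indicator (-A) x *\<^sub>R f x)"
    by (intro Bochner_Integration.integral_cong) (auto split: split_indicator)
  also have "\<dots> = (LINT x:A|lborel. f x) + (LINT x:-A|lborel. f x)"
    unfolding set_lebesgue_integral_def using assms
    by (intro Bochner_Integration.integral_add integrable_mult_indicator) auto
  finally show ?thesis .
qed

definition gauss_mass :: "real \<Rightarrow> real" where
  "gauss_mass \<epsilon> = (LINT t:{-1/2<..1/2}|lborel. exp (- t\<^sup>2 / \<epsilon>))"

definition gauss_tail :: "real \<Rightarrow> real" where
  "gauss_tail \<epsilon> = (LINT t:-{-1/2<..1/2}|lborel. exp (- t\<^sup>2 / \<epsilon>))"

definition gauss_coeff :: "real \<Rightarrow> real \<Rightarrow> complex" where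
  "gauss_coeff \<epsilon> m = (LINT t:{-1/2<..1/2}|lborel.
     exp (2 * pi * \<i> * complex_of_real (m * t)) * complex_of_real (exp (- t\<^sup>2 / \<epsilon>)))"

lemma gauss_mass_add_tail: "\<epsilon> > 0 \<Longrightarrow> gauss_mass \<epsilon> + gauss_tail \<epsilon> = sqrt (pi * \<epsilon>)"
  unfolding gauss_mass_def gauss_tail_def
  using lborel_integral_split_compl[OF integrable_gaussian, of \<epsilon> "{-1/2<..1/2}"] integral_gaussian[of \<epsilon>]
  by simp

lemma gauss_tail_nonneg: "0 \<le> gauss_tail \<epsilon>"
  unfolding gauss_tail_def set_lebesgue_integral_def by (intro Bochner_Integration.integral_nonneg) simp

lemma gauss_tail_le:
  assumes \<epsilon>: "\<epsilon> > 0"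
  shows "gauss_tail \<epsilon> \<le> sqrt 2 * exp (- 1 / (8 * \<epsilon>)) * sqrt (pi * \<epsilon>)"
proof -
  define \<eta> where "\<eta> = exp (- 1 / (8 * \<epsilon>))"
  \<comment> \<open>beyond \<open>1/2\<close>, half of the exponent already yields the factor \<open>\<eta>\<close>\<close>
  have "indicator (-{-1/2<..1/2}) t * exp (- t\<^sup>2 / \<epsilon>) \<le> \<eta> * exp (- t\<^sup>2 / (2 * \<epsilon>))" for t :: real
  proof (cases "t \<in> {-1/2<..1/2}")
    case True
    then show ?thesis by (simp add: \<eta>_def)
  next
    case False
    then have "\<bar>1/2\<bar> \<le> \<bar>t\<bar>"
      by auto
    then have "(1/2)\<^sup>2 \<le> t\<^sup>2"
      by (simp only: abs_le_square_iff)
    then have "1 / (8 * \<epsilon>) \<le> t\<^sup>2 / (2 * \<epsilon>)"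
      using \<epsilon> by (simp add: field_simps power2_eq_square)
    then have "exp (- t\<^sup>2 / (2 * \<epsilon>)) \<le> \<eta>"
      by (simp add: \<eta>_def)
    moreover have "exp (- t\<^sup>2 / \<epsilon>) = exp (- t\<^sup>2 / (2 * \<epsilon>)) * exp (- t\<^sup>2 / (2 * \<epsilon>))"
      by (simp add: exp_add[symmetric] field_simps)
    ultimately show ?thesis
      using False by (simp add: mult_right_mono)
  qed
  then have "gauss_tail \<epsilon> \<le> (LINT t|lborel. \<eta> * exp (- t\<^sup>2 / (2 * \<epsilon>)))"
    unfolding gauss_tail_def set_lebesgue_integral_def using \<epsilon>
    by (intro Bochner_Integration.integral_mono integrable_mult_indicator integrable_gaussian
        integrable_mult_right) auto
  also have "\<dots> = sqrt 2 * \<eta> * sqrt (pi * \<epsilon>)"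
    using integral_gaussian[of "2 * \<epsilon>"] \<epsilon> by (simp add: real_sqrt_mult)
  finally show ?thesis unfolding \<eta>_def .
qed

lemma norm_gauss_coeff_le: "cmod (gauss_coeff \<epsilon> m) \<le> gauss_mass \<epsilon>"
proof -
  have "cmod (gauss_coeff \<epsilon> m) \<le> (LINT t|lborel. norm (indicator {-1/2<..1/2} t *\<^sub>R
      (exp (2 * pi * \<i> * complex_of_real (m * t)) * complex_of_real (exp (- t\<^sup>2 / \<epsilon>)))))"
    unfolding gauss_coeff_def set_lebesgue_integral_def by (rule integral_norm_bound)
  also have "\<dots> = gauss_mass \<epsilon>"
    unfolding gauss_mass_def set_lebesgue_integral_def
    by (intro Bochner_Integration.integral_cong) (auto simp: norm_mult split: split_indicator)
  finally show ?thesis .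
qed

lemma gauss_coeff_approx:
  assumes \<epsilon>: "\<epsilon> > 0"
  shows "cmod (gauss_coeff \<epsilon> m - gauss_mass \<epsilon> * exp (- (pi\<^sup>2) * \<epsilon> * m\<^sup>2)) \<le> 2 * gauss_tail \<epsilon>"
proof -
  define g where "g t = exp (2 * pi * \<i> * complex_of_real (m * t)) * complex_of_real (exp (- t\<^sup>2 / \<epsilon>))" for t
  define e where "e = exp (- (pi\<^sup>2) * \<epsilon> * m\<^sup>2)"
  define T where "T = (LINT t:-{-1/2<..1/2}|lborel. g t)"
  have g_char: "g = (\<lambda>t. exp (\<i> * complex_of_real ((2 * pi * m) * t)) * complex_of_real (exp (- t\<^sup>2 / \<epsilon>)))"
    by (simp add: g_def fun_eq_iff mult_ac)
  have integrable_g: "integrable lborel g"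
    unfolding g_char by (rule integrable_gaussian_char[OF \<epsilon>])
  have "integral\<^sup>L lborel g = complex_of_real (sqrt (pi * \<epsilon>) * e)"
    unfolding g_char integral_gaussian_char[OF \<epsilon>] by (simp add: e_def power_mult_distrib)
  moreover have "integral\<^sup>L lborel g = gauss_coeff \<epsilon> m + T"
    unfolding gauss_coeff_def T_def g_def[symmetric]
    by (rule lborel_integral_split_compl[OF integrable_g]) auto
  ultimately have "gauss_coeff \<epsilon> m = complex_of_real (sqrt (pi * \<epsilon>) * e) - T"
    by (simp add: eq_diff_eq)
  then have diff: "gauss_coeff \<epsilon> m - gauss_mass \<epsilon> * e = gauss_tail \<epsilon> * e - T"
    unfolding gauss_mass_add_tail[OF \<epsilon>, symmetric] by (simp add: algebra_simps)
  have norm_T: "cmod T \<le> gauss_tail \<epsilon>"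
  proof -
    have "cmod T \<le> (LINT t|lborel. norm (indicator (-{-1/2<..1/2}) t *\<^sub>R g t))"
      unfolding T_def set_lebesgue_integral_def by (rule integral_norm_bound)
    also have "\<dots> = gauss_tail \<epsilon>"
      unfolding gauss_tail_def set_lebesgue_integral_def
      by (intro Bochner_Integration.integral_cong)
         (auto simp: g_def norm_mult split: split_indicator)
    finally show ?thesis .
  qed
  have e: "0 < e" "e \<le> 1" using \<epsilon> by (auto simp: e_def)
  have "cmod (gauss_coeff \<epsilon> m - gauss_mass \<epsilon> * e) \<le> cmod (complex_of_real (gauss_tail \<epsilon> * e)) + cmod T"
    unfolding diff by (rule norm_triangle_ineq4)
  also have "\<dots> \<le> gauss_tail \<epsilon> + gauss_tail \<epsilon>"
    using e gauss_tail_nonneg[of \<epsilon>] norm_T by (intro add_mono) (simp_all add: norm_mult abs_of_nonneg mult_left_le)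
  finally show ?thesis unfolding e_def by simp
qed


lemma sqrt_2_le_three_halves: "sqrt 2 \<le> (3/2 :: real)"
  by (rule real_le_lsqrt) (auto simp: power2_eq_square)

lemma gauss_mass_lower_bound:
  assumes \<epsilon>: "\<epsilon> > 0" and small: "exp (- 1 / (8 * \<epsilon>)) \<le> 1/8"
  shows "3/4 * sqrt (pi * \<epsilon>) \<le> gauss_mass \<epsilon>"
proof -
  have "0 \<le> sqrt (pi * \<epsilon>)"
    using \<epsilon> by simp
  moreover have "sqrt 2 * exp (- 1 / (8 * \<epsilon>)) \<le> 3/16"
    using mult_mono[OF sqrt_2_le_three_halves small] by simp
  then have "sqrt 2 * exp (- 1 / (8 * \<epsilon>)) * sqrt (pi * \<epsilon>) \<le> 3/16 * sqrt (pi * \<epsilon>)"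
    by (rule mult_right_mono) (use \<epsilon> in simp)
  ultimately show ?thesis
    using gauss_tail_le[OF \<epsilon>] gauss_mass_add_tail[OF \<epsilon>] by linarith
qed

lemma gauss_coeff_div_mass_approx:
  assumes \<epsilon>: "\<epsilon> > 0" and small: "exp (- 1 / (8 * \<epsilon>)) \<le> 1/8"
  shows "cmod (gauss_coeff \<epsilon> m / gauss_mass \<epsilon> - exp (- (pi\<^sup>2) * \<epsilon> * m\<^sup>2)) \<le> 4 * exp (- 1 / (8 * \<epsilon>))"
proof -
  define \<eta> where "\<eta> = exp (- 1 / (8 * \<epsilon>))"
  define G where "G = sqrt (pi * \<epsilon>)"
  define D where "D = gauss_coeff \<epsilon> m - gauss_mass \<epsilon> * exp (- (pi\<^sup>2) * \<epsilon> * m\<^sup>2)"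
  have G: "G > 0" using \<epsilon> by (simp add: G_def)
  have mass: "3/4 * G \<le> gauss_mass \<epsilon>"
    unfolding G_def by (rule gauss_mass_lower_bound[OF \<epsilon> small])
  have "sqrt 2 * \<eta> * G \<le> 3/2 * \<eta> * G"
    using sqrt_2_le_three_halves G by (intro mult_right_mono) (auto simp: \<eta>_def)
  then have D_bound: "cmod D \<le> 3 * \<eta> * G"
    using gauss_coeff_approx[OF \<epsilon>, of m] gauss_tail_le[OF \<epsilon>] unfolding D_def \<eta>_def G_def by linarith
  have "gauss_coeff \<epsilon> m / gauss_mass \<epsilon> - exp (- (pi\<^sup>2) * \<epsilon> * m\<^sup>2) = D / gauss_mass \<epsilon>"
    using mass G by (simp add: D_def field_simps)
  then have "cmod (gauss_coeff \<epsilon> m / gauss_mass \<epsilon> - exp (- (pi\<^sup>2) * \<epsilon> * m\<^sup>2)) = cmod D / gauss_mass \<epsilon>"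
    using mass G by (simp add: norm_divide)
  also have "\<dots> \<le> 3 * \<eta> * G / (3/4 * G)"
    by (rule frac_le) (use D_bound mass G in \<open>auto simp: \<eta>_def\<close>)
  also have "\<dots> = 4 * \<eta>"
    using G by simp
  finally show ?thesis unfolding \<eta>_def .
qed

(* A vanishing mass is harmless here, because x / 0 = 0. *)
lemma norm_gauss_coeff_div_mass_le: "cmod (gauss_coeff \<epsilon> m / gauss_mass \<epsilon>) \<le> 1"
proof (cases "gauss_mass \<epsilon> = 0")
  case False
  moreover have "0 \<le> gauss_mass \<epsilon>"
    by (rule order_trans[OF norm_ge_zero norm_gauss_coeff_le])
  ultimately have "gauss_mass \<epsilon> > 0"
    by simp
  then show ?thesis
    using norm_gauss_coeff_le[of \<epsilon> m] by (simp add: norm_divide)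
qed simp

section \<open>Integrals of products over boxes\<close>

lemma integral_prod_Basis:
  fixes G :: "'a::euclidean_space \<Rightarrow> real \<Rightarrow> 'c::{real_normed_field, banach, second_countable_topology}"
  assumes int: "\<And>b. b \<in> Basis \<Longrightarrow> integrable lborel (G b)"
  shows "integral\<^sup>L lborel (\<lambda>x. \<Prod>b\<in>Basis. G b (x \<bullet> b)) = (\<Prod>b\<in>Basis. integral\<^sup>L lborel (G b))"
proof -
  interpret product_sigma_finite "\<lambda>_::'a. lborel :: real measure" by standard
  have meas [measurable]: "(\<lambda>x::'a. \<Prod>b\<in>Basis. G b (x \<bullet> b)) \<in> borel_measurable borel"
    using int by (intro borel_measurable_prod) (auto dest!: borel_measurable_integrable)
  have T [measurable]: "(\<lambda>f. \<Sum>b\<in>Basis. f b *\<^sub>R b) \<in> measurable (\<Pi>\<^sub>M b\<in>Basis. lborel) (borel :: 'a measure)"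
    by measurable
  have eq: "(\<Prod>b\<in>Basis. G b ((\<Sum>b'\<in>Basis. f b' *\<^sub>R b') \<bullet> b)) = (\<Prod>b\<in>Basis. G b (f b))" for f :: "'a \<Rightarrow> real"
    by (intro prod.cong refl) (simp add: inner_sum_left inner_Basis if_distrib sum.delta cong: if_cong)
  show ?thesis
    by (subst lborel_eq, subst integral_distr[OF T meas], unfold eq)
       (rule product_integral_prod, auto intro: int)
qed

lemma integral_prod_vec:
  fixes G :: "'d::finite \<Rightarrow> real \<Rightarrow> 'c::{real_normed_field, banach, second_countable_topology}"
  assumes int: "\<And>i. integrable lborel (G i)"
  shows "integral\<^sup>L lborel (\<lambda>x::real^'d. \<Prod>i\<in>UNIV. G i (x $ i)) = (\<Prod>i\<in>UNIV. integral\<^sup>L lborel (G i))"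
proof -
  have inj: "inj (\<lambda>i::'d. axis i (1::real))"
    by (auto intro!: injI simp: axis_eq_axis)
  define G' where "G' = G \<circ> inv (\<lambda>i::'d. axis i (1::real))"
  have G'_axis: "G' (axis i 1) = G i" for i
    by (simp add: G'_def inv_f_f[OF inj])
  have Basis_vec: "(Basis :: (real^'d) set) = range (\<lambda>i. axis i 1)"
    by (auto simp: Basis_vec_def)
  have prod_Basis: "(\<Prod>b\<in>Basis. H b) = (\<Prod>i\<in>UNIV. H (axis i 1))" for H :: "real^'d \<Rightarrow> 'c"
    unfolding Basis_vec by (subst prod.reindex[OF inj]) simp
  have int': "integrable lborel (G' b)" if "b \<in> Basis" for b
    using that G'_axis int unfolding Basis_vec by auto
  have prod_eq: "(\<Prod>b\<in>Basis. G' b (x \<bullet> b)) = (\<Prod>i\<in>UNIV. G i (x $ i))" for x :: "real^'d"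
    unfolding prod_Basis G'_axis by (simp add: inner_axis)
  show ?thesis
    using integral_prod_Basis[of G', OF int'] unfolding prod_eq prod_Basis G'_axis .
qed

lemma integral_lebesgue_on_eq_set_integral_lborel:
  fixes f :: "'a::euclidean_space \<Rightarrow> 'b::{banach, second_countable_topology}"
  assumes "S \<in> sets borel" "f \<in> borel_measurable borel"
  shows "integral\<^sup>L (lebesgue_on S) f = (LINT x:S|lborel. f x)"
  using assms by (simp add: integral_restrict_space integral_completion set_lebesgue_integral_def)

definition Ioc_box :: "real \<Rightarrow> real \<Rightarrow> (real ^ 'd) set" where
  "Ioc_box a b = {x. \<forall>i. a < x $ i \<and> x $ i \<le> b}"

lemma cube_eq_Ioc_box: "cube = Ioc_box (-1/2) (1/2)"
  by (auto simp: cube_def Ioc_box_def)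

lemma sets_Ioc_box [measurable]: "Ioc_box a b \<in> sets borel"
proof -
  have "Ioc_box a b = (\<Inter>i. {x::real^'d. a < x $ i} \<inter> {x. x $ i \<le> b})"
    by (auto simp: Ioc_box_def)
  also have "\<dots> \<in> sets borel"
    by (intro sets.finite_INT)
       (auto intro!: borel_open borel_closed open_Collect_less closed_Collect_le continuous_intros)
  finally show ?thesis .
qed

lemma indicator_Ioc_box: "indicator (Ioc_box a b) x = (\<Prod>i\<in>UNIV. indicator {a<..b} (x $ i) :: real)"
proof (cases "x \<in> Ioc_box a b")
  case False
  then obtain i where "x $ i \<notin> {a<..b}"
    by (auto simp: Ioc_box_def)
  then have "(\<Prod>i\<in>UNIV. indicator {a<..b} (x $ i) :: real) = 0"
    by (intro prod_zero bexI[of _ i]) auto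
  then show ?thesis
    using False by simp
qed (auto simp: Ioc_box_def)

lemma integral_prod_Ioc_box:
  fixes g :: "'d::finite \<Rightarrow> real \<Rightarrow> 'c::{real_normed_field, banach, second_countable_topology}"
  assumes cont: "\<And>i. continuous_on UNIV (g i)"
  shows "integral\<^sup>L (lebesgue_on (Ioc_box a b)) (\<lambda>x::real^'d. \<Prod>i\<in>UNIV. g i (x $ i)) = (\<Prod>i\<in>UNIV. LINT t:{a<..b}|lborel. g i t)"
proof -
  have [measurable]: "g i \<in> borel_measurable borel" for i
    using cont by (intro borel_measurable_continuous_onI)
  have meas: "(\<lambda>x::real^'d. \<Prod>i\<in>UNIV. g i (x $ i)) \<in> borel_measurable borel"
    by measurable
  have eq: "indicator (Ioc_box a b) x *\<^sub>R (\<Prod>i\<in>UNIV. g i (x $ i))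
      = (\<Prod>i\<in>UNIV. indicator {a<..b} (x $ i) *\<^sub>R g i (x $ i))" for x :: "real^'d"
    unfolding indicator_Ioc_box by (simp add: scaleR_conv_of_real prod.distrib)
  have "set_integrable lborel {a..b} (g i)" for i
    unfolding set_integrable_def
    by (rule borel_integrable_compact) (auto intro: continuous_on_subset[OF cont])
  then have int: "integrable lborel (\<lambda>t. indicator {a<..b} t *\<^sub>R g i t)" for i
    unfolding set_integrable_def[symmetric] by (rule set_integrable_subset) auto
  show ?thesis
    unfolding integral_lebesgue_on_eq_set_integral_lborel[OF sets_Ioc_box meas]
      set_lebesgue_integral_def eq
    by (rule integral_prod_vec[OF int])
qed

section \<open>Fourier modes on the fundamental cube\<close>

lemma int_lattice_add: "k \<in> int_lattice \<Longrightarrow> l \<in> int_lattice \<Longrightarrow> k + l \<in> int_lattice"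
  by (auto simp: int_lattice_def)

lemma int_lattice_uminus: "k \<in> int_lattice \<Longrightarrow> - k \<in> int_lattice"
  by (auto simp: int_lattice_def)

lemma zero_in_int_lattice: "0 \<in> int_lattice"
  by (auto simp: int_lattice_def)

lemma axis_in_int_lattice: "axis j 1 \<in> int_lattice"
  by (auto simp: int_lattice_def axis_def)

lemma inner_int_lattice: "k \<in> int_lattice \<Longrightarrow> m \<in> int_lattice \<Longrightarrow> k \<bullet> m \<in> \<int>"
  unfolding int_lattice_def inner_vec_def by (auto intro!: Ints_sum Ints_mult)

lemma exp_2pi_i_Ints: "r \<in> \<int> \<Longrightarrow> exp (2 * pi * \<i> * complex_of_real r) = 1"
  by (elim Ints_cases) (auto simp: exp_eq_1 intro!: exI)

lemma exp_2pi_i_eq_imp_diff_Ints: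
  assumes "exp (2 * pi * \<i> * complex_of_real a) = exp (2 * pi * \<i> * complex_of_real b)"
  shows "a - b \<in> \<int>"
proof -
  have "exp (2 * pi * \<i> * complex_of_real (a - b)) = 1"
    using assms by (simp add: right_diff_distrib exp_diff)
  then obtain n :: int where "2 * pi * (a - b) = real_of_int (2 * n) * pi"
    by (auto simp: exp_eq_1)
  then show ?thesis by simp
qed

lemma fourier_mode_add: "fourier_mode (k + l) x = fourier_mode k x * fourier_mode l x"
  unfolding fourier_mode_def by (simp add: inner_add_left distrib_left exp_add[symmetric])

lemma fourier_mode_translate: "fourier_mode k (x + a) = fourier_mode k x * fourier_mode k a"
  unfolding fourier_mode_def by (simp add: inner_add_right distrib_left exp_add[symmetric])

lemma fourier_mode_zero [simp]: "fourier_mode 0 x = 1"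
  unfolding fourier_mode_def by simp

lemma cnj_fourier_mode: "cnj (fourier_mode k x) = fourier_mode (- k) x"
  unfolding fourier_mode_def by (simp add: exp_cnj)

lemma fourier_mode_lattice:
  "k \<in> int_lattice \<Longrightarrow> m \<in> int_lattice \<Longrightarrow> fourier_mode k m = 1"
  unfolding fourier_mode_def by (intro exp_2pi_i_Ints inner_int_lattice)

lemma fourier_mode_periodic:
  "k \<in> int_lattice \<Longrightarrow> m \<in> int_lattice \<Longrightarrow> fourier_mode k (x + m) = fourier_mode k x"
  by (simp add: fourier_mode_translate fourier_mode_lattice)

lemma continuous_on_fourier_mode [continuous_intros]: "continuous_on A (fourier_mode k)"
  unfolding fourier_mode_def by (intro continuous_intros)

lemma fourier_mode_eq_prod:
  "fourier_mode k x = (\<Prod>i\<in>UNIV. exp (2 * pi * \<i> * complex_of_real (k $ i * x $ i)))"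
  unfolding fourier_mode_def inner_vec_def by (simp add: sum_distrib_left exp_sum)

lemma integral_exp_2pi_i_Ioc:
  assumes "m \<in> \<int>"
  shows "(LINT t:{-1/2<..1/2}|lborel. exp (2 * pi * \<i> * complex_of_real (m * t))) = (if m = 0 then 1 else 0)"
proof (cases "m = 0")
  case True
  then show ?thesis by (simp add: set_lebesgue_integral_def)
next
  case False
  define c where "c = 2 * pi * \<i> * complex_of_real m"
  have c: "c \<noteq> 0" using False by (simp add: c_def)
  have e: "exp (2 * pi * \<i> * complex_of_real (m * t)) = exp (c * complex_of_real t)" for t
    by (simp add: c_def mult_ac)
  have "(LINT t:{-1/2<..1/2}|lborel. exp (2 * pi * \<i> * complex_of_real (m * t)))
      = (LBINT t=ereal (-1/2)..ereal (1/2). exp (c * complex_of_real t))"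
    unfolding e by (simp add: interval_integral_Ioc)
  also have "\<dots> = exp (c * complex_of_real (1/2)) / c - exp (c * complex_of_real (-1/2)) / c"
  proof (rule interval_integral_FTC_finite)
    fix x :: real
    have "((\<lambda>z. exp (c * z) / c) has_field_derivative exp (c * complex_of_real x)) (at (complex_of_real x))"
      using c by (auto intro!: derivative_eq_intros)
    then show "((\<lambda>t. exp (c * complex_of_real t) / c) has_vector_derivative exp (c * complex_of_real x))
        (at x within {min (- 1 / 2) (1 / 2)..max (- 1 / 2) (1 / 2)})"
      by (rule has_vector_derivative_real_field)
  qed (intro continuous_intros)
  also have "exp (c * complex_of_real (1/2)) = exp (c * complex_of_real (-1/2)) * exp (2 * pi * \<i> * complex_of_real m)"
    by (simp add: c_def exp_add[symmetric] field_simps)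
  finally show ?thesis
    using False exp_2pi_i_Ints[OF assms] by simp
qed

lemma integral_fourier_mode:
  assumes "k \<in> int_lattice"
  shows "integral\<^sup>L (lebesgue_on cube) (fourier_mode k) = (if k = 0 then 1 else 0)"
proof -
  have cont: "continuous_on UNIV (\<lambda>t. exp (2 * pi * \<i> * complex_of_real (k $ i * t)))" for i
    by (intro continuous_intros)
  have "integral\<^sup>L (lebesgue_on cube) (fourier_mode k)
      = (\<Prod>i\<in>UNIV. LINT t:{-1/2<..1/2}|lborel. exp (2 * pi * \<i> * complex_of_real (k $ i * t)))"
    unfolding fourier_mode_eq_prod[abs_def] cube_eq_Ioc_box by (rule integral_prod_Ioc_box[OF cont])
  also have "\<dots> = (\<Prod>i\<in>UNIV. if k $ i = 0 then 1 else 0)"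
    using assms by (intro prod.cong refl integral_exp_2pi_i_Ioc) (auto simp: int_lattice_def)
  also have "\<dots> = (if k = 0 then 1 else 0)"
    by (auto simp: vec_eq_iff prod_zero_iff)
  finally show ?thesis .
qed

definition closed_cube :: "(real ^ 'd) set" where
  "closed_cube = cbox (\<chi> _. -1/2) (\<chi> _. 1/2)"

lemma mem_closed_cube: "x \<in> closed_cube \<longleftrightarrow> (\<forall>i. -1/2 \<le> x $ i \<and> x $ i \<le> 1/2)"
  unfolding closed_cube_def by (auto simp: mem_box_cart)

lemma compact_closed_cube: "compact closed_cube"
  unfolding closed_cube_def by simp

lemma cube_subset_closed_cube: "cube \<subseteq> closed_cube"
  by (auto simp: cube_def mem_closed_cube less_imp_le)

lemma cube_lmeasurable: "cube \<in> lmeasurable"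
  using cube_subset_closed_cube compact_closed_cube
  by (intro bounded_set_imp_lmeasurable) (auto intro: bounded_subset compact_imp_bounded
      simp: cube_eq_Ioc_box)

lemma finite_measure_lebesgue_on_cube: "finite_measure (lebesgue_on cube)"
  by (rule finite_measure_lebesgue_on[OF cube_lmeasurable])

lemma measure_lebesgue_on_cube: "measure (lebesgue_on cube) (space (lebesgue_on cube)) = 1"
proof -
  have "integral\<^sup>L (lebesgue_on cube) (\<lambda>x::real^'d. 1::complex) = 1"
    using integral_fourier_mode[OF zero_in_int_lattice] by (simp cong: Bochner_Integration.integral_cong)
  then show ?thesis by (simp add: scaleR_conv_of_real)
qed

lemma bounded_on_closed_cube:
  fixes f :: "real ^ 'd \<Rightarrow> 'b::real_normed_vector"
  assumes "continuous_on closed_cube f"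
  obtains B where "\<And>x. x \<in> closed_cube \<Longrightarrow> norm (f x) \<le> B"
  using compact_imp_bounded[OF compact_continuous_image[OF assms compact_closed_cube]]
  by (auto simp: bounded_iff)

lemma measurable_cube_continuous:
  assumes "continuous_on closed_cube f"
  shows "f \<in> borel_measurable (lebesgue_on cube)"
  using cube_lmeasurable
  by (intro continuous_imp_measurable_on_sets_lebesgue continuous_on_subset[OF assms cube_subset_closed_cube]) auto

lemma integrable_cube_continuous:
  fixes f :: "real ^ 'd \<Rightarrow> complex"
  assumes "continuous_on closed_cube f"
  shows "integrable (lebesgue_on cube) f"
proof -
  interpret finite_measure "lebesgue_on cube" by (rule finite_measure_lebesgue_on_cube)
  obtain B where B: "\<And>x. x \<in> closed_cube \<Longrightarrow> norm (f x) \<le> B"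
    using bounded_on_closed_cube[OF assms] by blast
  show ?thesis
  proof (rule integrable_const_bound[where B = B])
    show "AE x in lebesgue_on cube. norm (f x) \<le> B"
      using B cube_subset_closed_cube by (auto intro!: AE_I2)
  qed (rule measurable_cube_continuous[OF assms])
qed

lemma norm_integral_cube_le:
  fixes g :: "real ^ 'd \<Rightarrow> complex"
  assumes "integrable (lebesgue_on cube) g" "\<And>x. x \<in> cube \<Longrightarrow> norm (g x) \<le> e"
  shows "norm (integral\<^sup>L (lebesgue_on cube) g) \<le> e"
proof -
  interpret finite_measure "lebesgue_on cube" by (rule finite_measure_lebesgue_on_cube)
  have "norm (integral\<^sup>L (lebesgue_on cube) g) \<le> integral\<^sup>L (lebesgue_on cube) (\<lambda>x. norm (g x))"
    by (rule integral_norm_bound)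
  also have "\<dots> \<le> integral\<^sup>L (lebesgue_on cube) (\<lambda>x::real^'d. e)"
    by (rule Bochner_Integration.integral_mono) (use assms in auto)
  also have "\<dots> = e"
    using measure_lebesgue_on_cube[where 'a = 'd] by simp
  finally show ?thesis .
qed

lemma integrable_cube_mult_continuous:
  fixes h g :: "real ^ 'd \<Rightarrow> complex"
  assumes h: "integrable (lebesgue_on cube) h" and g: "continuous_on closed_cube g"
  shows "integrable (lebesgue_on cube) (\<lambda>x. h x * g x)"
proof -
  obtain B where B: "\<And>x. x \<in> closed_cube \<Longrightarrow> norm (g x) \<le> B"
    using bounded_on_closed_cube[OF g] by blast
  show ?thesis
  proof (rule Bochner_Integration.integrable_bound[where f = "\<lambda>x. B * h x"])
    show "integrable (lebesgue_on cube) (\<lambda>x. B * h x)"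
      using h by (rule integrable_mult_right)
    show "(\<lambda>x. h x * g x) \<in> borel_measurable (lebesgue_on cube)"
      using borel_measurable_integrable[OF h] measurable_cube_continuous[OF g] by measurable
    have "norm (h x * g x) \<le> norm (B * h x)" if "x \<in> closed_cube" for x
    proof -
      have "norm (h x) * norm (g x) \<le> norm (h x) * B"
        using B[OF that] by (rule mult_left_mono) simp
      also have "\<dots> \<le> norm (h x) * \<bar>B\<bar>"
        by (rule mult_left_mono) simp_all
      finally show ?thesis
        by (simp add: norm_mult mult.commute)
    qed
    then show "AE x in lebesgue_on cube. norm (h x * g x) \<le> norm (B * h x)"
      using cube_subset_closed_cube by (auto intro!: AE_I2)
  qed
qed

section \<open>Density of trigonometric polynomials\<close>

inductive_set trig_poly :: "(real ^ 'd \<Rightarrow> complex) set" where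
  mode: "k \<in> int_lattice \<Longrightarrow> fourier_mode k \<in> trig_poly"
| add: "f \<in> trig_poly \<Longrightarrow> g \<in> trig_poly \<Longrightarrow> (\<lambda>x. f x + g x) \<in> trig_poly"
| scale: "f \<in> trig_poly \<Longrightarrow> (\<lambda>x. c * f x) \<in> trig_poly"

lemma trig_poly_const: "(\<lambda>x. c) \<in> trig_poly"
  using trig_poly.scale[OF trig_poly.mode[OF zero_in_int_lattice], of c] by simp

lemma trig_poly_sum: "finite A \<Longrightarrow> (\<And>a. a \<in> A \<Longrightarrow> f a \<in> trig_poly) \<Longrightarrow> (\<lambda>x. \<Sum>a\<in>A. f a x) \<in> trig_poly"
  by (induction A rule: finite_induct) (auto intro: trig_poly_const trig_poly.add)

lemma trig_poly_mult_mode: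
  assumes "g \<in> trig_poly" "k \<in> int_lattice"
  shows "(\<lambda>x. fourier_mode k x * g x) \<in> trig_poly"
  using assms(1)
proof induction
  case (mode l)
  have "(\<lambda>x. fourier_mode k x * fourier_mode l x) = fourier_mode (k + l)"
    by (simp add: fourier_mode_add fun_eq_iff)
  then show ?case
    using trig_poly.mode[OF int_lattice_add[OF assms(2) mode]] by simp
next
  case (add f g)
  then show ?case using trig_poly.add[OF add.IH] by (simp add: distrib_left)
next
  case (scale f c)
  then show ?case using trig_poly.scale[OF scale.IH, of c] by (simp add: mult.left_commute)
qed

lemma trig_poly_mult:
  assumes "f \<in> trig_poly" "g \<in> trig_poly"
  shows "(\<lambda>x. f x * g x) \<in> trig_poly"
  using assms(1)
proof induction
  case (mode k)
  then show ?case using trig_poly_mult_mode[OF assms(2) mode] by simp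
next
  case (add f1 f2)
  then show ?case using trig_poly.add[OF add.IH] by (simp add: distrib_right)
next
  case (scale f c)
  then show ?case using trig_poly.scale[OF scale.IH, of c] by (simp add: mult.assoc)
qed

lemma continuous_on_trig_poly: "t \<in> trig_poly \<Longrightarrow> continuous_on A t"
  by (induction rule: trig_poly.induct) (auto intro!: continuous_intros)

text \<open>Stone-Weierstrass is applied on the compact image of the torus in \<open>\<complex>\<^sup>d\<close>, where
  polynomials in the coordinates pull back to trigonometric polynomials.\<close>

definition torus_embedding :: "real ^ 'd \<Rightarrow> complex ^ 'd" where
  "torus_embedding x = (\<chi> j. fourier_mode (axis j 1) x)"

lemma fourier_mode_axis: "fourier_mode (axis j 1) x = exp (2 * pi * \<i> * complex_of_real (x $ j))"
  unfolding fourier_mode_def by (simp add: inner_axis')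

lemma torus_embedding_eq_imp_lattice:
  assumes "torus_embedding x = torus_embedding y"
  shows "x - y \<in> int_lattice"
  using assms unfolding int_lattice_def
  by (auto simp: torus_embedding_def fourier_mode_axis vec_eq_iff intro: exp_2pi_i_eq_imp_diff_Ints)

lemma torus_embedding_periodic: "m \<in> int_lattice \<Longrightarrow> torus_embedding (x + m) = torus_embedding x"
  unfolding torus_embedding_def by (simp add: fourier_mode_periodic axis_in_int_lattice)

lemma continuous_on_torus_embedding [continuous_intros]: "continuous_on A torus_embedding"
  unfolding torus_embedding_def by (intro continuous_on_vec_lambda continuous_intros)

lemma lattice_translate_into_cube:
  fixes x :: "real ^ 'd"
  shows "\<exists>m\<in>int_lattice. x - m \<in> cube"
proof
  define m :: "real^'d" where "m = (\<chi> i. of_int \<lceil>x $ i - 1/2\<rceil>)"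
  show "m \<in> int_lattice"
    by (auto simp: m_def int_lattice_def)
  have "-1/2 < x $ i - m $ i \<and> x $ i - m $ i \<le> 1/2" for i
    using ceiling_correct[of "x $ i - 1/2"] unfolding m_def vec_lambda_beta by linarith
  then show "x - m \<in> cube"
    by (auto simp: cube_def)
qed

lemma range_torus_embedding: "range torus_embedding = torus_embedding ` closed_cube"
proof (intro equalityI subsetI)
  fix s assume "s \<in> range torus_embedding"
  then obtain x where s: "s = torus_embedding x" by auto
  obtain m where m: "m \<in> int_lattice" "x - m \<in> cube"
    using lattice_translate_into_cube by blast
  have "torus_embedding (x - m) = s"
    using torus_embedding_periodic[OF int_lattice_uminus[OF m(1)], of x] s by simp
  then show "s \<in> torus_embedding ` closed_cube"
    using m cube_subset_closed_cube by blast
qed auto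

lemma continuous_factor_torus_embedding:
  fixes g :: "real ^ 'd \<Rightarrow> 'b::real_normed_vector"
  assumes cont: "continuous_on closed_cube g"
    and compat: "\<And>x y. x \<in> closed_cube \<Longrightarrow> y \<in> closed_cube \<Longrightarrow> torus_embedding x = torus_embedding y \<Longrightarrow> g x = g y"
  obtains F where "continuous_on (torus_embedding ` closed_cube) F"
    "\<And>x. x \<in> closed_cube \<Longrightarrow> F (torus_embedding x) = g x"
proof -
  define F where "F s = g (SOME x. x \<in> closed_cube \<and> torus_embedding x = s)" for s
  have F: "F (torus_embedding x) = g x" if "x \<in> closed_cube" for x
  proof -
    have "\<exists>y. y \<in> closed_cube \<and> torus_embedding y = torus_embedding x"
      using that by blast
    then have "(SOME y. y \<in> closed_cube \<and> torus_embedding y = torus_embedding x) \<in> closed_cube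
        \<and> torus_embedding (SOME y. y \<in> closed_cube \<and> torus_embedding y = torus_embedding x) = torus_embedding x"
      by (rule someI_ex)
    then show ?thesis
      unfolding F_def using compat that by blast
  qed
  have quotient: "quotient_map (top_of_set closed_cube) (top_of_set (torus_embedding ` closed_cube)) torus_embedding"
  proof (rule continuous_imp_quotient_map)
    show "continuous_map (top_of_set closed_cube) (top_of_set (torus_embedding ` closed_cube)) torus_embedding"
      by (simp add: continuous_map_in_subtopology continuous_on_torus_embedding)
    show "compact_space (top_of_set closed_cube)"
      by (simp add: compact_space_subtopology compactin_euclidean_iff compact_closed_cube)
    show "Hausdorff_space (top_of_set (torus_embedding ` closed_cube))"
      by (simp add: Hausdorff_space_subtopology)
  qed simp
  have "continuous_map (top_of_set closed_cube) euclidean (F \<circ> torus_embedding)"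
    unfolding continuous_map_iff_continuous using cont by (rule continuous_on_eq) (simp add: F)
  then have "continuous_map (top_of_set (torus_embedding ` closed_cube)) euclidean F"
    by (rule continuous_compose_quotient_map[OF quotient])
  then have "continuous_on (torus_embedding ` closed_cube) F"
    by (simp add: continuous_map_iff_continuous)
  then show ?thesis
    using that F by blast
qed

lemma bounded_linear_vec_complex_expansion:
  fixes p :: "complex ^ 'd \<Rightarrow> real"
  assumes "bounded_linear p"
  shows "p z = (\<Sum>j\<in>UNIV. Re (z $ j) * p (axis j 1) + Im (z $ j) * p (axis j \<i>))"
proof -
  interpret linear p using assms by (rule bounded_linear.linear)
  have "z = (\<Sum>j\<in>UNIV. Re (z $ j) *\<^sub>R axis j 1 + Im (z $ j) *\<^sub>R axis j \<i>)"
    by (simp add: vec_eq_iff sum_component axis_def sum.distrib complex_eq_iff if_distrib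
        cong: if_cong del: scaleR_conv_of_real)
  then have "p z = p (\<Sum>j\<in>UNIV. Re (z $ j) *\<^sub>R axis j 1 + Im (z $ j) *\<^sub>R axis j \<i>)"
    by simp
  also have "\<dots> = (\<Sum>j\<in>UNIV. Re (z $ j) * p (axis j 1) + Im (z $ j) * p (axis j \<i>))"
    by (simp add: sum add scale)
  finally show ?thesis .
qed

lemma trig_poly_real_polynomial_function:
  assumes "real_polynomial_function p"
  shows "(\<lambda>x. complex_of_real (p (torus_embedding x))) \<in> trig_poly"
  using assms
proof induction
  case (linear f)
  define a where "a j = complex_of_real (f (axis j 1)) / 2 + complex_of_real (f (axis j \<i>)) / (2 * \<i>)" for j
  define b where "b j = complex_of_real (f (axis j 1)) / 2 - complex_of_real (f (axis j \<i>)) / (2 * \<i>)" for j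
  have Re: "complex_of_real (Re w) = (w + cnj w) / 2" and Im: "complex_of_real (Im w) = (w - cnj w) / (2 * \<i>)" for w
    by (simp_all add: complex_eq_iff)
  have expansion: "complex_of_real (f (torus_embedding x))
      = (\<Sum>j\<in>UNIV. a j * fourier_mode (axis j 1) x + b j * fourier_mode (- axis j 1) x)" for x
  proof -
    have "complex_of_real (f (torus_embedding x))
      = (\<Sum>j\<in>UNIV. (fourier_mode (axis j 1) x + cnj (fourier_mode (axis j 1) x)) / 2 * f (axis j 1)
                  + (fourier_mode (axis j 1) x - cnj (fourier_mode (axis j 1) x)) / (2 * \<i>) * f (axis j \<i>))"
      unfolding bounded_linear_vec_complex_expansion[OF linear, of "torus_embedding x"]
      unfolding of_real_sum of_real_add of_real_mult Re Im torus_embedding_def vec_lambda_beta ..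
    also have "\<dots> = (\<Sum>j\<in>UNIV. a j * fourier_mode (axis j 1) x + b j * fourier_mode (- axis j 1) x)"
      by (intro sum.cong refl) (simp add: cnj_fourier_mode a_def b_def field_simps)
    finally show ?thesis .
  qed
  have "(\<lambda>x. \<Sum>j\<in>UNIV. a j * fourier_mode (axis j 1) x + b j * fourier_mode (- axis j 1) x) \<in> trig_poly"
    by (intro trig_poly_sum trig_poly.add trig_poly.scale trig_poly.mode int_lattice_uminus
        axis_in_int_lattice) simp
  then show ?case
    unfolding expansion .
qed (auto intro: trig_poly_const trig_poly.add trig_poly_mult)

lemma trig_poly_polynomial_function:
  fixes g :: "complex ^ 'd \<Rightarrow> complex"
  assumes "polynomial_function g"
  shows "(\<lambda>x. g (torus_embedding x)) \<in> trig_poly"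
proof -
  have "real_polynomial_function (Re \<circ> g)" "real_polynomial_function (Im \<circ> g)"
    using assms unfolding polynomial_function_def by (auto intro: bounded_linear_Re bounded_linear_Im)
  then have "(\<lambda>x. complex_of_real (Re (g (torus_embedding x))) + \<i> * complex_of_real (Im (g (torus_embedding x)))) \<in> trig_poly"
    by (auto intro!: trig_poly.add trig_poly.scale dest!: trig_poly_real_polynomial_function)
  then show ?thesis
    by (simp add: complex_eq[symmetric])
qed

lemma compact_torus_embedding_closed_cube: "compact (torus_embedding ` closed_cube)"
  by (intro compact_continuous_image continuous_on_torus_embedding compact_closed_cube)

lemma trig_poly_uniform_approx:
  fixes F :: "complex ^ 'd \<Rightarrow> complex"
  assumes "continuous_on (torus_embedding ` closed_cube) F" "e > 0"
  obtains t where "t \<in> trig_poly" "\<And>x. norm (F (torus_embedding x) - t x) < e"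
proof -
  obtain g where g: "polynomial_function g"
    and close: "\<And>s. s \<in> torus_embedding ` closed_cube \<Longrightarrow> norm (F s - g s) < e"
    using Stone_Weierstrass_polynomial_function[OF compact_torus_embedding_closed_cube assms] by blast
  have "norm (F (torus_embedding x) - g (torus_embedding x)) < e" for x
    using close range_torus_embedding by blast
  then show ?thesis
    using that trig_poly_polynomial_function[OF g] by blast
qed

section \<open>Periodic integrals and completeness of the Fourier modes\<close>

lemma continuous_factor_torus_embedding_periodic:
  fixes f :: "real ^ 'd \<Rightarrow> complex"
  assumes cont: "continuous_on UNIV f" and per: "\<And>x m. m \<in> int_lattice \<Longrightarrow> f (x + m) = f x"
  obtains F where "continuous_on (torus_embedding ` closed_cube) F" "\<And>x. F (torus_embedding x) = f x"
proof -
  have compat: "f x = f y" if "torus_embedding x = torus_embedding y" for x y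
    using per[OF torus_embedding_eq_imp_lattice[OF that], of y] by simp
  obtain F where F: "continuous_on (torus_embedding ` closed_cube) F"
    and F_eq: "\<And>x. x \<in> closed_cube \<Longrightarrow> F (torus_embedding x) = f x"
    using continuous_factor_torus_embedding[OF continuous_on_subset[OF cont subset_UNIV]] compat by blast
  have "F (torus_embedding x) = f x" for x
  proof -
    obtain m where m: "m \<in> int_lattice" "x - m \<in> cube"
      using lattice_translate_into_cube by blast
    have "torus_embedding (x - m) = torus_embedding x"
      using torus_embedding_periodic[OF int_lattice_uminus[OF m(1)]] by simp
    then show ?thesis
      using F_eq[of "x - m"] compat[of "x - m" x] m(2) cube_subset_closed_cube by auto
  qed
  then show ?thesis
    using that F by blast
qed

lemma integral_trig_poly_translate:
  assumes "t \<in> trig_poly"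
  shows "integral\<^sup>L (lebesgue_on cube) (\<lambda>x. t (x + a)) = integral\<^sup>L (lebesgue_on cube) t"
  using assms
proof induction
  case (mode k)
  then show ?case
    by (simp add: fourier_mode_translate integral_fourier_mode)
next
  case (add f g)
  have "continuous_on closed_cube (\<lambda>x. f (x + a))" "continuous_on closed_cube (\<lambda>x. g (x + a))"
    using add.hyps by (auto intro!: continuous_on_compose2[OF continuous_on_trig_poly] continuous_intros)
  moreover have "continuous_on closed_cube f" "continuous_on closed_cube g"
    using add.hyps by (auto intro: continuous_on_trig_poly)
  ultimately show ?case
    using add.IH by (simp add: integrable_cube_continuous)
qed simp

lemma integral_cube_translate_periodic:
  fixes f :: "real ^ 'd \<Rightarrow> complex"
  assumes cont: "continuous_on UNIV f" and per: "\<And>x m. m \<in> int_lattice \<Longrightarrow> f (x + m) = f x"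
  shows "integral\<^sup>L (lebesgue_on cube) (\<lambda>x. f (x + a)) = integral\<^sup>L (lebesgue_on cube) f"
proof -
  obtain F where F: "continuous_on (torus_embedding ` closed_cube) F" and F_eq: "\<And>x. F (torus_embedding x) = f x"
    using continuous_factor_torus_embedding_periodic[OF cont per] by blast
  let ?I = "\<lambda>g. integral\<^sup>L (lebesgue_on cube) g"
  have "norm (?I (\<lambda>x. f (x + a)) - ?I f) \<le> 0 + e" if e: "e > 0" for e
  proof -
    obtain t where t: "t \<in> trig_poly" and close: "\<And>x. norm (f x - t x) < e / 2"
      using trig_poly_uniform_approx[OF F, of "e / 2"] e F_eq by auto
    have close': "norm (t x - f x) \<le> e / 2" for x
      using close[of x] by (simp add: norm_minus_commute)
    have cont_t: "continuous_on UNIV t"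
      by (rule continuous_on_trig_poly[OF t])
    have int: "integrable (lebesgue_on cube) (\<lambda>x. f (x + a))" "integrable (lebesgue_on cube) (\<lambda>x. t (x + a))"
      "integrable (lebesgue_on cube) f" "integrable (lebesgue_on cube) t"
      by (auto intro!: integrable_cube_continuous continuous_on_compose2[OF cont] continuous_on_compose2[OF cont_t]
          continuous_on_subset[OF cont] continuous_on_subset[OF cont_t] continuous_intros)
    have "?I (\<lambda>x. f (x + a)) - ?I f = ?I (\<lambda>x. f (x + a) - t (x + a)) + ?I (\<lambda>x. t x - f x)"
      using integral_trig_poly_translate[OF t, of a] int by simp
    also have "norm \<dots> \<le> e / 2 + e / 2"
      using int close close'
      by (intro norm_triangle_le add_mono norm_integral_cube_le) (auto intro: less_imp_le)
    finally show ?thesis by simp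
  qed
  then have "norm (?I (\<lambda>x. f (x + a)) - ?I f) \<le> 0"
    by (rule field_le_epsilon)
  then show ?thesis by simp
qed

lemma integral_orthogonal_trig_poly:
  fixes h :: "real ^ 'd \<Rightarrow> complex"
  assumes h: "integrable (lebesgue_on cube) h"
    and orth: "\<forall>k\<in>int_lattice. integral\<^sup>L (lebesgue_on cube) (\<lambda>x. h x * cnj (fourier_mode k x)) = 0"
    and t: "t \<in> trig_poly"
  shows "integral\<^sup>L (lebesgue_on cube) (\<lambda>x. h x * cnj (t x)) = 0"
  using t
proof induction
  case (mode k)
  then show ?case using orth by blast
next
  case (add f g)
  have "continuous_on closed_cube f" "continuous_on closed_cube g"
    using add.hyps by (auto intro: continuous_on_trig_poly)
  then have "integrable (lebesgue_on cube) (\<lambda>x. h x * cnj (f x))" "integrable (lebesgue_on cube) (\<lambda>x. h x * cnj (g x))"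
    by (auto intro!: integrable_cube_mult_continuous[OF h] continuous_on_cnj)
  then show ?case
    using add.IH by (simp add: distrib_left)
next
  case (scale f c)
  have "(\<lambda>x. h x * cnj (c * f x)) = (\<lambda>x. cnj c * (h x * cnj (f x)))"
    by (simp add: fun_eq_iff mult_ac)
  then show ?case
    using scale.IH by simp
qed

lemma integral_orthogonal_continuous:
  fixes h :: "real ^ 'd \<Rightarrow> complex"
  assumes h: "integrable (lebesgue_on cube) h"
    and orth: "\<forall>k\<in>int_lattice. integral\<^sup>L (lebesgue_on cube) (\<lambda>x. h x * cnj (fourier_mode k x)) = 0"
    and F: "continuous_on (torus_embedding ` closed_cube) F"
  shows "integral\<^sup>L (lebesgue_on cube) (\<lambda>x. h x * F (torus_embedding x)) = 0"
proof -
  let ?I = "\<lambda>g. integral\<^sup>L (lebesgue_on cube) g"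
  define H where "H = ?I (\<lambda>x. norm (h x))"
  have H: "H \<ge> 0"
    unfolding H_def by (rule Bochner_Integration.integral_nonneg) auto
  have cont_FE: "continuous_on closed_cube (\<lambda>x. F (torus_embedding x))"
    by (rule continuous_on_compose2[OF F continuous_on_torus_embedding]) auto
  have "norm (?I (\<lambda>x. h x * F (torus_embedding x))) \<le> 0 + e" if e: "e > 0" for e
  proof -
    define e' where "e' = e / (H + 1)"
    have e': "e' > 0" using e H by (simp add: e'_def)
    obtain t where t: "t \<in> trig_poly" and close: "\<And>x. norm (cnj (F (torus_embedding x)) - t x) < e'"
      using trig_poly_uniform_approx[OF continuous_on_cnj[OF F] e'] by blast
    have int: "integrable (lebesgue_on cube) (\<lambda>x. h x * F (torus_embedding x))"
      "integrable (lebesgue_on cube) (\<lambda>x. h x * cnj (t x))"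
      by (auto intro!: integrable_cube_mult_continuous[OF h] cont_FE continuous_on_cnj continuous_on_trig_poly[OF t])
    have "?I (\<lambda>x. h x * F (torus_embedding x)) = ?I (\<lambda>x. h x * (F (torus_embedding x) - cnj (t x)))"
      using integral_orthogonal_trig_poly[OF h orth t] int by (simp add: right_diff_distrib)
    also have "norm \<dots> \<le> ?I (\<lambda>x. e' * norm (h x))"
    proof (rule Bochner_Integration.integral_norm_bound_integral)
      have "norm (F (torus_embedding x) - cnj (t x)) \<le> e'" for x
        using close[of x] by (metis complex_cnj_cnj complex_cnj_diff complex_mod_cnj less_imp_le)
      then show "norm (h x * (F (torus_embedding x) - cnj (t x))) \<le> e' * norm (h x)" for x
        by (metis mult.commute mult_left_mono norm_ge_zero norm_mult)
    qed (use int h in \<open>auto simp: right_diff_distrib\<close>)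
    also have "\<dots> = e' * H"
      unfolding H_def by simp
    also have "\<dots> \<le> e"
      using e' H by (simp add: e'_def field_simps)
    finally show ?thesis by simp
  qed
  then have "norm (?I (\<lambda>x. h x * F (torus_embedding x))) \<le> 0"
    by (rule field_le_epsilon)
  then show ?thesis by simp
qed

lemma torus_embedding_eq_imp_boundary:
  assumes "x \<in> closed_cube" "y \<in> closed_cube" "torus_embedding x = torus_embedding y" "x \<noteq> y"
  shows "\<exists>i. \<bar>x $ i\<bar> = 1/2"
proof -
  obtain i where ne: "x $ i \<noteq> y $ i"
    using assms(4) by (auto simp: vec_eq_iff)
  have "x $ i - y $ i \<in> \<int>"
    using torus_embedding_eq_imp_lattice[OF assms(3)] by (auto simp: int_lattice_def)
  then obtain n :: int where n: "x $ i - y $ i = of_int n"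
    by (auto elim: Ints_cases)
  have "-1/2 \<le> x $ i" "x $ i \<le> 1/2" "-1/2 \<le> y $ i" "y $ i \<le> 1/2"
    using assms(1,2) by (auto simp: mem_closed_cube)
  moreover have "n \<noteq> 0"
    using ne n by auto
  ultimately have "n = 1 \<or> n = -1"
    using n by linarith
  with n \<open>-1/2 \<le> x $ i\<close> \<open>x $ i \<le> 1/2\<close> \<open>-1/2 \<le> y $ i\<close> \<open>y $ i \<le> 1/2\<close>
  have "\<bar>x $ i\<bar> = 1/2"
    by auto
  then show ?thesis ..
qed

lemma integral_orthogonal_continuous_boundary_zero:
  fixes h g :: "real ^ 'd \<Rightarrow> complex"
  assumes h: "integrable (lebesgue_on cube) h"
    and orth: "\<forall>k\<in>int_lattice. integral\<^sup>L (lebesgue_on cube) (\<lambda>x. h x * cnj (fourier_mode k x)) = 0"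
    and g: "continuous_on closed_cube g"
    and boundary: "\<And>x. x \<in> closed_cube \<Longrightarrow> \<exists>i. \<bar>x $ i\<bar> = 1/2 \<Longrightarrow> g x = 0"
  shows "integral\<^sup>L (lebesgue_on cube) (\<lambda>x. h x * g x) = 0"
proof -
  \<comment> \<open>vanishing on the boundary makes \<open>g\<close> well defined on the torus\<close>
  have "g x = g y" if "x \<in> closed_cube" "y \<in> closed_cube" "torus_embedding x = torus_embedding y" for x y
    using torus_embedding_eq_imp_boundary[OF that] torus_embedding_eq_imp_boundary[of y x] that boundary
    by (cases "x = y") auto
  then obtain F where F: "continuous_on (torus_embedding ` closed_cube) F"
    and F_eq: "\<And>x. x \<in> closed_cube \<Longrightarrow> F (torus_embedding x) = g x"
    using continuous_factor_torus_embedding[OF g] by blast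
  have "integral\<^sup>L (lebesgue_on cube) (\<lambda>x. h x * g x) = integral\<^sup>L (lebesgue_on cube) (\<lambda>x. h x * F (torus_embedding x))"
    using F_eq cube_subset_closed_cube by (intro Bochner_Integration.integral_cong) auto
  also have "\<dots> = 0"
    by (rule integral_orthogonal_continuous[OF h orth F])
  finally show ?thesis .
qed

definition unit_clamp :: "complex \<Rightarrow> complex" where
  "unit_clamp z = z / complex_of_real (max 1 (norm z))"

lemma continuous_on_unit_clamp: "continuous_on A unit_clamp"
  unfolding unit_clamp_def by (intro continuous_intros) auto

lemma norm_unit_clamp_le: "norm (unit_clamp z) \<le> 1"
  unfolding unit_clamp_def by (auto simp: norm_divide field_simps)

lemma unit_clamp_id: "norm z \<le> 1 \<Longrightarrow> unit_clamp z = z"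
  unfolding unit_clamp_def by (simp add: max_def)

lemma norm_unit_clamp_mult_le: "0 \<le> r \<Longrightarrow> r \<le> 1 \<Longrightarrow> norm (unit_clamp z * complex_of_real r) \<le> 1"
  by (simp add: norm_mult mult_le_one norm_unit_clamp_le)

definition cube_cutoff :: "nat \<Rightarrow> real ^ 'd \<Rightarrow> real" where
  "cube_cutoff n x = (\<Prod>i\<in>UNIV. min 1 (max 0 ((real n + 1) * (1/2 - \<bar>x $ i\<bar>))))"

lemma continuous_on_cube_cutoff: "continuous_on A (cube_cutoff n)"
  unfolding cube_cutoff_def by (intro continuous_intros)

lemma cube_cutoff_nonneg: "0 \<le> cube_cutoff n x"
  unfolding cube_cutoff_def by (auto intro: prod_nonneg)

lemma cube_cutoff_le_1: "cube_cutoff n x \<le> 1"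
  unfolding cube_cutoff_def by (auto intro: prod_le_1)

lemma cube_cutoff_boundary:
  assumes "\<bar>x $ i\<bar> = 1/2"
  shows "cube_cutoff n x = 0"
proof -
  have "min 1 (max 0 ((real n + 1) * (1/2 - \<bar>x $ i\<bar>))) = 0"
    unfolding assms by simp
  then show ?thesis
    unfolding cube_cutoff_def by (intro prod_zero bexI[of _ i]) auto
qed

lemma cube_cutoff_tendsto:
  fixes x :: "real ^ 'd"
  assumes "\<And>i. \<bar>x $ i\<bar> < 1/2"
  shows "(\<lambda>n. cube_cutoff n x) \<longlonglongrightarrow> 1"
proof -
  have lim: "(\<lambda>n. min 1 (max 0 ((real n + 1) * (1/2 - \<bar>x $ i\<bar>)))) \<longlonglongrightarrow> 1" for i
  proof (rule tendsto_eventually)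
    have d: "1/2 - \<bar>x $ i\<bar> > 0"
      using assms by simp
    obtain N :: nat where N: "real N > 1 / (1/2 - \<bar>x $ i\<bar>)"
      using reals_Archimedean2 by blast
    have "1 < real N * (1/2 - \<bar>x $ i\<bar>)"
      using N d by (simp add: field_simps)
    moreover have "real N * (1/2 - \<bar>x $ i\<bar>) \<le> (real n + 1) * (1/2 - \<bar>x $ i\<bar>)" if "N \<le> n" for n
      using that d by (intro mult_right_mono) auto
    ultimately have "min 1 (max 0 ((real n + 1) * (1/2 - \<bar>x $ i\<bar>))) = 1" if "N \<le> n" for n
      using that by fastforce
    then show "\<forall>\<^sub>F n in sequentially. min 1 (max 0 ((real n + 1) * (1/2 - \<bar>x $ i\<bar>))) = 1"
      by (rule eventually_sequentiallyI)
  qed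
  have "(\<lambda>n. cube_cutoff n x) \<longlonglongrightarrow> (\<Prod>i\<in>(UNIV::'d set). 1)"
    unfolding cube_cutoff_def by (rule tendsto_prod) (rule lim)
  then show ?thesis by simp
qed

lemma abs_component_less_half:
  assumes "x \<in> cube" "x $ i \<noteq> 1/2"
  shows "\<bar>x $ i\<bar> < 1/2"
proof -
  have "-1/2 < x $ i" "x $ i \<le> 1/2"
    using assms(1) by (auto simp: cube_def)
  with assms(2) show ?thesis
    by arith
qed

lemma negligible_cube_upper_faces: "negligible {x :: real ^ 'd. \<exists>i. x $ i = 1/2}"
proof -
  have "{x :: real ^ 'd. \<exists>i. x $ i = 1/2} = (\<Union>i. {x. x \<bullet> axis i 1 = 1/2})"
    by (auto simp: cart_eq_inner_axis[symmetric])
  moreover have "negligible {x::real^'d. x \<bullet> axis i 1 = 1/2}" for i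
    by (rule negligible_standard_hyperplane) simp
  ultimately show ?thesis
    by (auto intro: negligible_Union)
qed

lemma continuous_approx_measurable_cube:
  fixes u :: "real ^ 'd \<Rightarrow> complex"
  assumes u: "u \<in> borel_measurable (lebesgue_on cube)" and norm_u: "\<And>x. norm (u x) \<le> 1"
  obtains G where "\<And>n. continuous_on UNIV (G n)" "\<And>n x. norm (G n x) \<le> 1"
    "\<And>n x. \<exists>i. \<bar>x $ i\<bar> = 1/2 \<Longrightarrow> G n x = 0"
    "AE x in lebesgue_on cube. (\<lambda>n. G n x) \<longlonglongrightarrow> u x"
proof -
  have "u measurable_on cube"
    by (rule measurable_on_iff_borel_measurable[THEN iffD2, OF fmeasurableD[OF cube_lmeasurable] u])
  then obtain N g where N: "negligible N" and g: "\<And>n. continuous_on UNIV (g n)"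
    and lim: "\<And>x. x \<notin> N \<Longrightarrow> (\<lambda>n. g n x) \<longlonglongrightarrow> (if x \<in> cube then u x else 0)"
    unfolding measurable_on_def by blast
  define G where "G n x = unit_clamp (g n x) * complex_of_real (cube_cutoff n x)" for n x
  have "continuous_on UNIV (G n)" for n
    unfolding G_def
    by (intro continuous_intros continuous_on_compose2[OF continuous_on_unit_clamp g] continuous_on_cube_cutoff) auto
  moreover have "norm (G n x) \<le> 1" for n x
    unfolding G_def by (intro norm_unit_clamp_mult_le cube_cutoff_nonneg cube_cutoff_le_1)
  moreover have "G n x = 0" if "\<exists>i. \<bar>x $ i\<bar> = 1/2" for n x
    using that cube_cutoff_boundary unfolding G_def by auto
  moreover have "AE x in lebesgue_on cube. (\<lambda>n. G n x) \<longlonglongrightarrow> u x"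
  proof -
    have conv: "(\<lambda>n. G n x) \<longlonglongrightarrow> u x" if x: "x \<in> cube" "x \<notin> N \<union> {x. \<exists>i. x $ i = 1/2}" for x
    proof -
      have interior: "\<bar>x $ i\<bar> < 1/2" for i
        using x by (intro abs_component_less_half) auto
      have "(\<lambda>n. complex_of_real (cube_cutoff n x)) \<longlonglongrightarrow> complex_of_real 1"
        by (intro tendsto_of_real cube_cutoff_tendsto interior)
      moreover have "(\<lambda>n. g n x) \<longlonglongrightarrow> u x"
        using lim[of x] x by simp
      then have "(\<lambda>n. unit_clamp (g n x)) \<longlonglongrightarrow> unit_clamp (u x)"
        by (rule continuous_on_tendsto_compose[OF continuous_on_unit_clamp[of UNIV]]) auto
      ultimately show ?thesis
        unfolding G_def using tendsto_mult unit_clamp_id[OF norm_u] by fastforce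
    qed
    have "N \<union> {x :: real ^ 'd. \<exists>i. x $ i = 1/2} \<in> null_sets lebesgue"
      using N negligible_cube_upper_faces by (auto simp: negligible_iff_null_sets)
    then have "AE x in lebesgue. x \<in> cube \<longrightarrow> (\<lambda>n. G n x) \<longlonglongrightarrow> u x"
      using conv by (auto dest: AE_not_in elim!: eventually_mono)
    then show ?thesis
      by (subst AE_restrict_space_iff) (simp_all add: fmeasurableD[OF cube_lmeasurable])
  qed
  ultimately show ?thesis
    by (rule that)
qed

lemma integral_orthogonal_bounded_measurable:
  fixes h u :: "real ^ 'd \<Rightarrow> complex"
  assumes h: "integrable (lebesgue_on cube) h"
    and orth: "\<forall>k\<in>int_lattice. integral\<^sup>L (lebesgue_on cube) (\<lambda>x. h x * cnj (fourier_mode k x)) = 0"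
    and u: "u \<in> borel_measurable (lebesgue_on cube)" and norm_u: "\<And>x. norm (u x) \<le> 1"
  shows "integral\<^sup>L (lebesgue_on cube) (\<lambda>x. h x * u x) = 0"
proof -
  obtain G where G: "\<And>n. continuous_on UNIV (G n)" and norm_G: "\<And>n x. norm (G n x) \<le> 1"
    and boundary: "\<And>n x. \<exists>i. \<bar>x $ i\<bar> = 1/2 \<Longrightarrow> G n x = 0"
    and lim: "AE x in lebesgue_on cube. (\<lambda>n. G n x) \<longlonglongrightarrow> u x"
    using continuous_approx_measurable_cube[OF u norm_u] by blast
  have "(\<lambda>n. integral\<^sup>L (lebesgue_on cube) (\<lambda>x. h x * G n x)) \<longlonglongrightarrow> integral\<^sup>L (lebesgue_on cube) (\<lambda>x. h x * u x)"
  proof (rule integral_dominated_convergence[where w = "\<lambda>x. norm (h x)"])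
    show "(\<lambda>x. h x * G n x) \<in> borel_measurable (lebesgue_on cube)" for n
      using borel_measurable_integrable[OF h] measurable_cube_continuous[OF continuous_on_subset[OF G subset_UNIV]]
      by measurable
    show "(\<lambda>x. h x * u x) \<in> borel_measurable (lebesgue_on cube)"
      using borel_measurable_integrable[OF h] u by measurable
    show "AE x in lebesgue_on cube. norm (h x * G n x) \<le> norm (h x)" for n
    proof (rule AE_I2)
      show "norm (h x * G n x) \<le> norm (h x)" for x
        using mult_left_mono[OF norm_G[of n x] norm_ge_zero[of "h x"]] by (simp add: norm_mult)
    qed
    show "AE x in lebesgue_on cube. (\<lambda>n. h x * G n x) \<longlonglongrightarrow> h x * u x"
      using lim by eventually_elim (rule tendsto_mult_left)
  qed (use h in auto)
  moreover have "integral\<^sup>L (lebesgue_on cube) (\<lambda>x. h x * G n x) = 0" for n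
  proof (rule integral_orthogonal_continuous_boundary_zero[OF h orth])
    show "continuous_on closed_cube (G n)"
      using G by (rule continuous_on_subset) simp
    show "G n x = 0" if "\<exists>i. \<bar>x $ i\<bar> = 1/2" for x
      using boundary[OF that] .
  qed
  ultimately show ?thesis
    using LIMSEQ_unique[OF _ tendsto_const] by simp
qed

theorem fourier_modes_complete:
  fixes h :: "real ^ 'd \<Rightarrow> complex"
  assumes h: "h \<in> borel_measurable (lebesgue_on cube)"
    and h2: "integrable (lebesgue_on cube) (\<lambda>x. (norm (h x))\<^sup>2)"
    and orth: "\<forall>k\<in>int_lattice. integral\<^sup>L (lebesgue_on cube) (\<lambda>x. h x * cnj (fourier_mode k x)) = 0"
  shows "AE x in lebesgue_on cube. h x = 0"
proof -
  interpret finite_measure "lebesgue_on cube" by (rule finite_measure_lebesgue_on_cube)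
  have "(\<lambda>x. norm (h x)) \<in> borel_measurable (lebesgue_on cube)"
    using h by measurable
  then have norm_h_int: "integrable (lebesgue_on cube) (\<lambda>x. norm (h x))"
    using h2 by (rule square_integrable_imp_integrable)
  then have h_int: "integrable (lebesgue_on cube) h"
    using integrable_norm_iff[OF h] by simp
  \<comment> \<open>the phase of \<open>cnj h\<close>: testing \<open>h\<close> against it gives \<open>\<integral>|h|\<close>\<close>
  define u where "u x = cnj (h x) / complex_of_real (norm (h x))" for x
  have [measurable]: "cnj \<in> borel_measurable borel"
    by (intro borel_measurable_continuous_onI continuous_intros)
  have "u \<in> borel_measurable (lebesgue_on cube)"
    unfolding u_def using h by measurable
  moreover have "norm (u x) \<le> 1" for x
    unfolding u_def by (cases "h x = 0") (auto simp: norm_divide)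
  ultimately have "integral\<^sup>L (lebesgue_on cube) (\<lambda>x. h x * u x) = 0"
    by (rule integral_orthogonal_bounded_measurable[OF h_int orth])
  moreover have "h x * u x = norm (h x)" for x
  proof (cases "h x = 0")
    case False
    have "h x * cnj (h x) = complex_of_real (norm (h x)) * complex_of_real (norm (h x))"
      using complex_norm_square[of "h x"] by (simp add: power2_eq_square)
    then show ?thesis
      using False unfolding u_def by (simp add: field_simps)
  qed (simp add: u_def)
  ultimately have "integral\<^sup>L (lebesgue_on cube) (\<lambda>x. norm (h x)) = 0"
    by simp
  then show ?thesis
    using integral_nonneg_eq_0_iff_AE[OF norm_h_int] by simp
qed

section \<open>The regularised transfer operator\<close>

lemma int_lattice_nonempty: "int_lattice \<noteq> {}"
  using zero_in_int_lattice by blast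

lemma torus_dist_eq_infdist: "torus_dist x y = infdist (x - y) int_lattice"
proof -
  show ?thesis
    unfolding torus_dist_def infdist_notempty[OF int_lattice_nonempty] dist_norm
    by (metis (no_types, opaque_lifting) diff_diff_eq2 minus_diff_eq norm_minus_cancel add.commute diff_conv_add_uminus)
qed

lemma infdist_int_lattice_periodic:
  assumes m: "m \<in> int_lattice"
  shows "infdist (w + m) int_lattice = infdist w int_lattice"
proof -
  have lattice: "(\<lambda>k. k - m) ` int_lattice = int_lattice"
  proof (intro equalityI subsetI)
    show "k \<in> int_lattice" if "k \<in> (\<lambda>k. k - m) ` int_lattice" for k
      using that m by (auto simp: int_lattice_def)
    show "k \<in> (\<lambda>k. k - m) ` int_lattice" if "k \<in> int_lattice" for k
      using that m by (intro image_eqI[of _ _ "k + m"]) (auto intro: int_lattice_add)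
  qed
  have "infdist (w + m) int_lattice = (INF k\<in>int_lattice. dist (w + m) k)"
    by (rule infdist_notempty[OF int_lattice_nonempty])
  also have "\<dots> = (INF k\<in>int_lattice. dist w (k - m))"
    by (simp add: dist_norm algebra_simps)
  also have "\<dots> = (INF k\<in>(\<lambda>k. k - m) ` int_lattice. dist w k)"
    by (simp add: image_image)
  also have "\<dots> = infdist w int_lattice"
    unfolding lattice by (simp add: infdist_notempty[OF int_lattice_nonempty])
  finally show ?thesis .
qed

lemma infdist_int_lattice_closed_cube:
  assumes "w \<in> closed_cube"
  shows "infdist w int_lattice = norm w"
proof (rule antisym)
  show "infdist w int_lattice \<le> norm w"
    using infdist_le[OF zero_in_int_lattice, of w] by simp
  have "norm w \<le> dist w k" if k: "k \<in> int_lattice" for k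
  proof -
    have "(w $ i)\<^sup>2 \<le> ((w - k) $ i)\<^sup>2" for i
    proof -
      have "-1/2 \<le> w $ i" "w $ i \<le> 1/2"
        using assms by (auto simp: mem_closed_cube)
      then have w: "\<bar>w $ i\<bar> \<le> 1/2"
        by arith
      obtain n :: int where n: "k $ i = of_int n"
        using k by (auto simp: int_lattice_def elim: Ints_cases)
      have "\<bar>w $ i\<bar> \<le> \<bar>w $ i - k $ i\<bar>"
      proof (cases "n = 0")
        case False
        then have "\<bar>real_of_int n\<bar> \<ge> 1"
          by linarith
        then show ?thesis
          using w n by linarith
      qed (simp add: n)
      then show ?thesis
        by (simp add: abs_le_square_iff)
    qed
    then have "w \<bullet> w \<le> (w - k) \<bullet> (w - k)"
      unfolding inner_vec_def by (intro sum_mono) (simp add: power2_eq_square)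
    then show ?thesis
      by (simp add: dist_norm norm_le)
  qed
  then show "norm w \<le> infdist w int_lattice"
    using zero_in_int_lattice by (subst infdist_notempty) (auto intro!: cINF_greatest)
qed

lemma teps_eq_kernel: "teps \<epsilon> \<theta> x y = teps \<epsilon> 0 (x - (y - \<theta>)) 0"
  unfolding teps_def torus_dist_eq_infdist by (simp add: algebra_simps)

lemma continuous_on_teps_kernel: "continuous_on A (\<lambda>x. teps \<epsilon> 0 x 0)"
  unfolding teps_def torus_dist_eq_infdist divide_inverse by (intro continuous_intros)

lemma teps_kernel_periodic: "m \<in> int_lattice \<Longrightarrow> teps \<epsilon> 0 (x + m) 0 = teps \<epsilon> 0 x 0"
  unfolding teps_def torus_dist_eq_infdist by (simp add: infdist_int_lattice_periodic)

lemma Teps_fourier_mode: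
  assumes k: "k \<in> int_lattice"
  shows "Teps \<epsilon> \<theta> (fourier_mode k) y
    = fourier_mode (- k) \<theta> * (LINT x|lebesgue_on cube. fourier_mode k x * complex_of_real (teps \<epsilon> 0 x 0))
      * fourier_mode k y"
proof -
  define a where "a = y - \<theta>"
  define f where "f x = fourier_mode k x * complex_of_real (teps \<epsilon> 0 (x - a) 0)" for x
  have "continuous_on UNIV f"
    unfolding f_def
    by (intro continuous_intros continuous_on_compose2[OF continuous_on_teps_kernel[of UNIV]]) auto
  moreover have "f (x + m) = f x" if m: "m \<in> int_lattice" for x m
  proof -
    have "teps \<epsilon> 0 (x + m - a) 0 = teps \<epsilon> 0 (x - a) 0"
      using teps_kernel_periodic[OF m, of \<epsilon> "x - a"] by (simp add: algebra_simps)
    then show ?thesis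
      using fourier_mode_periodic[OF k m] by (simp add: f_def)
  qed
  ultimately have translate: "integral\<^sup>L (lebesgue_on cube) f = integral\<^sup>L (lebesgue_on cube) (\<lambda>x. f (x + a))"
    by (rule integral_cube_translate_periodic[symmetric])
  have "Teps \<epsilon> \<theta> (fourier_mode k) y = integral\<^sup>L (lebesgue_on cube) f"
    unfolding Teps_def f_def[abs_def] a_def by (simp add: teps_eq_kernel[of \<epsilon> \<theta> _ y])
  also have "\<dots> = (LINT x|lebesgue_on cube. fourier_mode k a * (fourier_mode k x * complex_of_real (teps \<epsilon> 0 x 0)))"
    unfolding translate by (simp add: f_def fourier_mode_translate mult_ac)
  also have "\<dots> = fourier_mode k a * (LINT x|lebesgue_on cube. fourier_mode k x * complex_of_real (teps \<epsilon> 0 x 0))"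
    by (rule integral_mult_right_zero)
  also have "fourier_mode k a = fourier_mode (- k) \<theta> * fourier_mode k y"
    by (simp add: a_def fourier_mode_def inner_diff_right right_diff_distrib exp_diff exp_minus field_simps)
  finally show ?thesis
    by (simp only: mult_ac)
qed

lemma scaleR_cube_eq_Ioc_box:
  assumes c: "c > 0"
  shows "(\<lambda>x. c *\<^sub>R x) ` (cube :: (real ^ 'd) set) = Ioc_box (- (c / 2)) (c / 2)"
proof (intro equalityI subsetI)
  fix x :: "real ^ 'd"
  assume "x \<in> (\<lambda>x. c *\<^sub>R x) ` cube"
  then obtain y where y: "y \<in> cube" "x = c *\<^sub>R y"
    by blast
  have "c * (-1/2) < c * y $ i \<and> c * y $ i \<le> c * (1/2)" for i
    using y(1) c by (intro conjI mult_strict_left_mono mult_left_mono) (auto simp: cube_def)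
  then show "x \<in> Ioc_box (- (c / 2)) (c / 2)"
    using y(2) by (auto simp: Ioc_box_def)
next
  fix x :: "real ^ 'd"
  assume "x \<in> Ioc_box (- (c / 2)) (c / 2)"
  then have "inverse c *\<^sub>R x \<in> cube"
    using c by (auto simp: cube_def Ioc_box_def field_simps)
  moreover have "x = c *\<^sub>R (inverse c *\<^sub>R x)"
    using c by simp
  ultimately show "x \<in> (\<lambda>x. c *\<^sub>R x) ` cube"
    by blast
qed

lemma set_integral_gaussian_Ioc_scaled:
  assumes c: "c > 0"
  shows "(LINT t:{- (c/2)<..c/2}|lborel. exp (- t\<^sup>2)) = c * gauss_mass (1 / c\<^sup>2)"
proof -
  have "(LINT t:{- (c/2)<..c/2}|lborel. exp (- t\<^sup>2))
      = c * (LINT u|lborel. indicator {- (c/2)<..c/2} (0 + c * u) * exp (- (0 + c * u)\<^sup>2))"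
    unfolding set_lebesgue_integral_def using c
    by (subst lborel_integral_real_affine[where c = c and t = 0]) auto
  also have "(\<lambda>u. indicator {- (c/2)<..c/2} (0 + c * u) * exp (- (0 + c * u)\<^sup>2))
      = (\<lambda>u. indicator {-1/2<..1/2} u * exp (- u\<^sup>2 / (1 / c\<^sup>2)) :: real)"
  proof
    fix u :: real
    have "c * u \<in> {- (c/2)<..c/2} \<longleftrightarrow> u \<in> {-1/2<..1/2}"
      using mult_less_cancel_left_pos[OF c, of "-1/2" u] mult_le_cancel_left_pos[OF c, of u "1/2"] by auto
    then show "indicator {- (c/2)<..c/2} (0 + c * u) * exp (- (0 + c * u)\<^sup>2) = indicator {-1/2<..1/2} u * exp (- u\<^sup>2 / (1 / c\<^sup>2))"
      by (simp add: indicator_def power_mult_distrib)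
  qed
  finally show ?thesis
    by (simp add: gauss_mass_def set_lebesgue_integral_def)
qed

lemma Zeps_eq_gauss_mass_power:
  assumes \<epsilon>: "\<epsilon> > 0"
  shows "Zeps \<epsilon> TYPE('d::finite) = gauss_mass \<epsilon> ^ CARD('d)"
proof -
  define c where "c = \<epsilon> powr (-1/2)"
  have c: "c > 0" "1 / c\<^sup>2 = \<epsilon>" "\<epsilon> powr (1/2) * c = 1"
    using \<epsilon> by (simp_all add: c_def power2_eq_square powr_add[symmetric] powr_minus_divide)
  have "integral\<^sup>L (lebesgue_on ((\<lambda>x. c *\<^sub>R x) ` (cube :: (real ^ 'd) set))) (\<lambda>\<zeta>. exp (- (norm \<zeta>)\<^sup>2))
      = integral\<^sup>L (lebesgue_on (Ioc_box (- (c / 2)) (c / 2))) (\<lambda>\<zeta>::real^'d. \<Prod>i\<in>UNIV. exp (- (\<zeta> $ i)\<^sup>2))"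
    unfolding scaleR_cube_eq_Ioc_box[OF c(1)] power2_norm_eq_inner inner_vec_def
    by (simp add: exp_sum[symmetric] sum_negf power2_eq_square)
  also have "\<dots> = (c * gauss_mass \<epsilon>) ^ CARD('d)"
    by (subst integral_prod_Ioc_box) (auto intro!: continuous_intros simp: set_integral_gaussian_Ioc_scaled c)
  finally have "Zeps \<epsilon> TYPE('d) = \<epsilon> powr (real CARD('d) / 2) * (c * gauss_mass \<epsilon>) ^ CARD('d)"
    by (simp add: Zeps_def c_def)
  also have "\<dots> = (\<epsilon> powr (1/2) * c) ^ CARD('d) * gauss_mass \<epsilon> ^ CARD('d)"
    using \<epsilon> by (simp add: powr_realpow[symmetric] powr_powr power_mult_distrib)
  finally show ?thesis
    using c(3) by simp
qed

lemma integral_fourier_mode_kernel: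
  fixes k :: "real ^ 'd"
  assumes \<epsilon>: "\<epsilon> > 0"
  shows "(LINT x|lebesgue_on cube. fourier_mode k x * complex_of_real (teps \<epsilon> 0 x 0))
    = (\<Prod>i\<in>UNIV. gauss_coeff \<epsilon> (k $ i)) / complex_of_real (gauss_mass \<epsilon>) ^ CARD('d)"
proof -
  define g :: "'d \<Rightarrow> real \<Rightarrow> complex"
    where "g = (\<lambda>i t. exp (complex_of_real (2 * pi) * \<i> * complex_of_real (k $ i * t)) * complex_of_real (exp (- t\<^sup>2 / \<epsilon>)))"
  have pointwise: "fourier_mode k x * complex_of_real (teps \<epsilon> 0 x 0)
      = (\<Prod>i\<in>UNIV. g i (x $ i)) / complex_of_real (gauss_mass \<epsilon>) ^ CARD('d)"
    if "x \<in> space (lebesgue_on cube)" for x :: "real ^ 'd"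
  proof -
    have "x \<in> closed_cube"
      using that cube_subset_closed_cube by auto
    then have "teps \<epsilon> 0 x 0 = exp (- (norm x)\<^sup>2 / \<epsilon>) / gauss_mass \<epsilon> ^ CARD('d)"
      by (simp add: teps_def torus_dist_eq_infdist infdist_int_lattice_closed_cube Zeps_eq_gauss_mass_power[OF \<epsilon>])
    moreover have "exp (- (norm x)\<^sup>2 / \<epsilon>) = (\<Prod>i\<in>UNIV. exp (- (x $ i)\<^sup>2 / \<epsilon>))"
      unfolding power2_norm_eq_inner inner_vec_def
      by (simp add: exp_sum[symmetric] sum_negf sum_divide_distrib power2_eq_square)
    ultimately show ?thesis
      by (simp add: g_def fourier_mode_eq_prod prod.distrib of_real_prod)
  qed
  have "(LINT x|lebesgue_on cube. fourier_mode k x * complex_of_real (teps \<epsilon> 0 x 0))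
      = (LINT x|lebesgue_on cube. (\<Prod>i\<in>UNIV. g i (x $ i)) / complex_of_real (gauss_mass \<epsilon>) ^ CARD('d))"
    by (rule Bochner_Integration.integral_cong[OF refl pointwise])
  also have "\<dots> = integral\<^sup>L (lebesgue_on cube) (\<lambda>x. \<Prod>i\<in>UNIV. g i (x $ i)) / complex_of_real (gauss_mass \<epsilon>) ^ CARD('d)"
    by (rule integral_divide_zero)
  also have "integral\<^sup>L (lebesgue_on cube) (\<lambda>x::real^'d. \<Prod>i\<in>UNIV. g i (x $ i)) = (\<Prod>i\<in>UNIV. gauss_coeff \<epsilon> (k $ i))"
    unfolding cube_eq_Ioc_box
    by (subst integral_prod_Ioc_box) (use \<epsilon> in \<open>auto intro!: continuous_intros simp: g_def gauss_coeff_def\<close>)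
  finally show ?thesis .
qed

definition transfer_eigenvalue :: "real \<Rightarrow> real ^ 'd \<Rightarrow> real ^ 'd \<Rightarrow> complex" where
  "transfer_eigenvalue \<epsilon> \<theta> k =
     fourier_mode (- k) \<theta> * ((\<Prod>i\<in>UNIV. gauss_coeff \<epsilon> (k $ i)) / complex_of_real (gauss_mass \<epsilon>) ^ CARD('d))"

lemma Teps_fourier_mode_eigen:
  assumes "k \<in> int_lattice" "\<epsilon> > 0"
  shows "Teps \<epsilon> \<theta> (fourier_mode k) y = transfer_eigenvalue \<epsilon> \<theta> k * fourier_mode k y"
  by (simp add: Teps_fourier_mode[OF assms(1)] integral_fourier_mode_kernel[OF assms(2)] transfer_eigenvalue_def)

lemma transfer_eigenvalue_approx:
  fixes k \<theta> :: "real ^ 'd"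
  assumes \<epsilon>: "\<epsilon> > 0" and small: "exp (- 1 / (8 * \<epsilon>)) \<le> 1/8"
  shows "cmod (transfer_eigenvalue \<epsilon> \<theta> k
           - complex_of_real (exp (- (pi\<^sup>2) * \<epsilon> * (norm k)\<^sup>2)) * exp (- 2 * pi * \<i> * complex_of_real (k \<bullet> \<theta>)))
         \<le> 4 * CARD('d) * exp (- 1 / (8 * \<epsilon>))"
proof -
  define a where "a i = gauss_coeff \<epsilon> (k $ i) / complex_of_real (gauss_mass \<epsilon>)" for i
  define b where "b i = complex_of_real (exp (- (pi\<^sup>2) * \<epsilon> * (k $ i)\<^sup>2))" for i
  define p where "p = exp (- 2 * pi * \<i> * complex_of_real (k \<bullet> \<theta>))"
  have mode: "fourier_mode (- k) \<theta> = p"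
    by (simp add: fourier_mode_def p_def)
  have "cmod p = 1"
    by (simp add: p_def norm_exp_eq_Re)
  have "exp (- (pi\<^sup>2) * \<epsilon> * (norm k)\<^sup>2) = (\<Prod>i\<in>UNIV. exp (- (pi\<^sup>2) * \<epsilon> * (k $ i)\<^sup>2))"
    unfolding power2_norm_eq_inner inner_vec_def
    by (simp add: sum_distrib_left exp_sum power2_eq_square)
  then have prod_b: "complex_of_real (exp (- (pi\<^sup>2) * \<epsilon> * (norm k)\<^sup>2)) = (\<Prod>i\<in>UNIV. b i)"
    by (simp add: b_def)
  have prod_a: "(\<Prod>i\<in>UNIV. gauss_coeff \<epsilon> (k $ i)) / complex_of_real (gauss_mass \<epsilon>) ^ CARD('d) = (\<Prod>i\<in>UNIV. a i)"
    by (simp add: a_def prod_dividef)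
  have "cmod (transfer_eigenvalue \<epsilon> \<theta> k
           - complex_of_real (exp (- (pi\<^sup>2) * \<epsilon> * (norm k)\<^sup>2)) * exp (- 2 * pi * \<i> * complex_of_real (k \<bullet> \<theta>)))
      = cmod (p * ((\<Prod>i\<in>UNIV. a i) - (\<Prod>i\<in>UNIV. b i)))"
    unfolding transfer_eigenvalue_def mode prod_a prod_b p_def[symmetric] by (simp add: algebra_simps)
  also have "\<dots> = cmod ((\<Prod>i\<in>UNIV. a i) - (\<Prod>i\<in>UNIV. b i))"
    by (simp add: norm_mult \<open>cmod p = 1\<close>)
  also have "\<dots> \<le> (\<Sum>i\<in>UNIV. cmod (a i - b i))"
    by (rule norm_prod_diff) (use \<epsilon> in \<open>auto simp: a_def b_def norm_gauss_coeff_div_mass_le\<close>)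
  also have "\<dots> \<le> (\<Sum>i\<in>(UNIV :: 'd set). 4 * exp (- 1 / (8 * \<epsilon>)))"
    unfolding a_def b_def by (intro sum_mono gauss_coeff_div_mass_approx[OF \<epsilon> small])
  finally show ?thesis
    by simp
qed

lemma exp_neg_inverse_le_one_eighth:
  fixes \<epsilon> :: real
  assumes \<epsilon>: "\<epsilon> > 0" and small: "\<epsilon> \<le> 1 / (24 * ln 2)"
  shows "exp (- 1 / (8 * \<epsilon>)) \<le> 1/8"
proof -
  have "3 * ln 2 \<le> 1 / (8 * \<epsilon>)"
    using \<epsilon> small by (simp add: field_simps)
  then have "exp (- 1 / (8 * \<epsilon>)) \<le> exp (- (3 * ln 2))"
    by simp
  also have "exp (- (3 * ln 2)) = (1/8 :: real)"
    using exp_of_nat_mult[of 3 "ln (2::real)"] by (simp add: exp_minus)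
  finally show ?thesis .
qed

lemma transfer_eigenvalue_bound:
  fixes k \<theta> :: "real ^ 'd"
  assumes \<epsilon>: "\<epsilon> > 0" and small: "\<epsilon> < 1 / (8 * (real CARD('d) + 2) * ln 2)"
  shows "cmod (transfer_eigenvalue \<epsilon> \<theta> k
           - complex_of_real (exp (- (pi\<^sup>2) * \<epsilon> * (norm k)\<^sup>2)) * exp (- 2 * pi * \<i> * complex_of_real (k \<bullet> \<theta>)))
         \<le> 2 ^ (CARD('d) + 1) * exp (- 1 / (8 * \<epsilon>))"
proof -
  have "1 / (8 * (real CARD('d) + 2) * ln 2) \<le> 1 / (24 * ln 2)"
    by (intro divide_left_mono mult_right_mono) auto
  then have \<eta>: "exp (- 1 / (8 * \<epsilon>)) \<le> 1/8"
    using small \<epsilon> by (intro exp_neg_inverse_le_one_eighth) auto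
  have "2 * n \<le> 2 ^ n" if "1 \<le> n" for n :: nat
    using that by (induction n rule: dec_induct) auto
  then have "2 * CARD('d) \<le> 2 ^ CARD('d)"
    by (simp add: Suc_leI)
  then have "real (2 * CARD('d)) \<le> real (2 ^ CARD('d))"
    by (simp only: of_nat_le_iff)
  then have "4 * real CARD('d) \<le> 2 ^ (CARD('d) + 1)"
    by simp
  then have "4 * real CARD('d) * exp (- 1 / (8 * \<epsilon>)) \<le> 2 ^ (CARD('d) + 1) * exp (- 1 / (8 * \<epsilon>))"
    by (rule mult_right_mono) simp
  then show ?thesis
    using transfer_eigenvalue_approx[OF \<epsilon> \<eta>, of \<theta> k] by linarith
qed

lemma fourier_mode_eigenpair:
  fixes \<theta> :: "real ^ 'd"
  assumes "\<epsilon> > 0" "k \<in> int_lattice"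
  shows "\<exists>lam::complex.
            (\<forall>y. Teps \<epsilon> \<theta> (fourier_mode k) y = lam * fourier_mode k y)
          \<and> (\<epsilon> < 1 / (8 * (real CARD('d) + 2) * ln 2) \<longrightarrow>
               cmod (lam - complex_of_real (exp (- (pi\<^sup>2) * \<epsilon> * (norm k)\<^sup>2))
                        * exp (- 2 * pi * \<i> * complex_of_real (k \<bullet> \<theta>)))
               \<le> 2 ^ (CARD('d) + 1) * exp (- 1 / (8 * \<epsilon>)))"
proof (intro exI[of _ "transfer_eigenvalue \<epsilon> \<theta> k"] conjI allI impI)
  show "Teps \<epsilon> \<theta> (fourier_mode k) y = transfer_eigenvalue \<epsilon> \<theta> k * fourier_mode k y" for y
    by (rule Teps_fourier_mode_eigen[OF assms(2,1)])
qed (rule transfer_eigenvalue_bound[OF assms(1)])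

theorem proposition5p1:
  fixes \<theta> :: "real ^ 'd"
  assumes "\<forall>i. \<bar>\<theta> $ i\<bar> < 1/2"
  shows "(\<forall>h :: real ^ 'd \<Rightarrow> complex.
            h \<in> borel_measurable (lebesgue_on cube)
          \<and> integrable (lebesgue_on cube) (\<lambda>x. (norm (h x))\<^sup>2)
          \<and> (\<forall>k\<in>int_lattice. (LINT x|lebesgue_on cube. h x * cnj (fourier_mode k x)) = 0)
          \<longrightarrow> (AE x in lebesgue_on cube. h x = 0))
       \<and> (\<forall>\<epsilon>>0. \<forall>k\<in>int_lattice. \<exists>lam::complex.
            (\<forall>y. Teps \<epsilon> \<theta> (fourier_mode k) y = lam * fourier_mode k y)
          \<and> (\<epsilon> < 1 / (8 * (real CARD('d) + 2) * ln 2) \<longrightarrow>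
               cmod (lam - complex_of_real (exp (- (pi\<^sup>2) * \<epsilon> * (norm k)\<^sup>2))
                        * exp (- 2 * pi * \<i> * complex_of_real (k \<bullet> \<theta>)))
               \<le> 2 ^ (CARD('d) + 1) * exp (- 1 / (8 * \<epsilon>))))"
  by (intro conjI allI impI ballI fourier_mode_eigenpair) (auto intro: fourier_modes_complete)

end
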